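(* Let $\mathcal{C}$ be the class of all Myerson-regular distributions supported on $[0,1]$. For every sufficiently small $\epsilon>0$, it is possible to describe $\mathcal{C}$ with $b=\tilde{O}(\epsilon^{-1/2})$ bits and error $\epsilon$. Moreover this is tight up to polylogarithmic factors: any description of $\mathcal{C}$ with error $\epsilon$ requires $b=\Omega(\epsilon^{-1/2})$ bits.
   Context: A distribution with CDF $F$ is (Myerson-)regular if its revenue curve in quantile space $R(q)=q\cdot F^{-1}(1-q)$ is concave on $[0,1]$; for distributions with a differentiable PDF $f$ and no point masses this is equivalent to $f'(v)(1-F(v))\ge -2f(v)^2$. The Lévy distance between CDFs $F,G$ is $\mathrm{L\acute{e}vy}(F,G)=\inf\{\epsilon: F(v-\epsilon)-\epsilon\le G(v)\le F(v+\epsilon)+\epsilon\ \forall v\}$. A class of distributions $\mathcal{C}$ can be described with $b$ bits and error $\epsilon$ if there is a class $\mathcal{C}'$ of distributions with $|\mathcal{C}'|\le 2^b$ such that for every $F\in\mathcal{C}$ there is $F'\in\mathcal{C}'$ with $\mathrm{L\acute{e}vy}(F,F')\le\epsilon$. $\tilde{O}(\cdot)$ hides factors polylogarithmic in $1/\epsilon$. *)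

theory Defs
  imports "HOL-Analysis.Analysis"
begin

definition is_cdf :: "(real \<Rightarrow> real) \<Rightarrow> bool" where
  "is_cdf F \<longleftrightarrow> mono F \<and> (\<forall>x. continuous (at_right x) F)
      \<and> (F \<longlongrightarrow> 0) at_bot \<and> (F \<longlongrightarrow> 1) at_top"

definition supported_01 :: "(real \<Rightarrow> real) \<Rightarrow> bool" where
  "supported_01 F \<longleftrightarrow> (\<forall>v<0. F v = 0) \<and> F 1 = 1"

text \<open>Left limit F(v-) = Pr[X < v].\<close>
definition cdf_left :: "(real \<Rightarrow> real) \<Rightarrow> real \<Rightarrow> real" where
  "cdf_left F v = Sup (F ` {..<v})"

text \<open>Quantile value F^{-1}(1-q) for a distribution on [0,1]: the largest price v
  in [0,1] that sells with probability at least q, i.e. Pr[X \<ge> v] \<ge> q.\<close>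
definition price_at :: "(real \<Rightarrow> real) \<Rightarrow> real \<Rightarrow> real" where
  "price_at F q = Sup {v \<in> {0..1}. 1 - cdf_left F v \<ge> q}"

definition revenue_curve :: "(real \<Rightarrow> real) \<Rightarrow> real \<Rightarrow> real" where
  "revenue_curve F q = q * price_at F q"

definition myerson_regular :: "(real \<Rightarrow> real) \<Rightarrow> bool" where
  "myerson_regular F \<longleftrightarrow> concave_on {0..1} (revenue_curve F)"

definition regular_01 :: "(real \<Rightarrow> real) set" where
  "regular_01 = {F. is_cdf F \<and> supported_01 F \<and> myerson_regular F}"

definition levy_dist :: "(real \<Rightarrow> real) \<Rightarrow> (real \<Rightarrow> real) \<Rightarrow> real" where
  "levy_dist F G = Inf {e. e \<ge> 0 \<and> (\<forall>v. F (v - e) - e \<le> G v \<and> G v \<le> F (v + e) + e)}"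

definition describable :: "(real \<Rightarrow> real) set \<Rightarrow> nat \<Rightarrow> real \<Rightarrow> bool" where
  "describable \<C> b \<epsilon> \<longleftrightarrow> (\<exists>\<C>'. finite \<C>' \<and> card \<C>' \<le> 2 ^ b \<and> (\<forall>G\<in>\<C>'. is_cdf G)
      \<and> (\<forall>F\<in>\<C>. \<exists>G\<in>\<C>'. levy_dist F G \<le> \<epsilon>))"

end

theory Submission
  imports Defs
begin

text \<open>
  Sample the revenue curve \<open>R\<close> of a regular distribution at the quantiles
  \<open>j/n\<close>, \<open>n \<approx> 4/\<epsilon>\<close>. Since \<open>R\<close> is concave with \<open>0 \<le> R(q) \<le> q\<close>, it is approximated to within
  \<open>O(\<epsilon> q)\<close> by its linear interpolation through \<open>O(\<epsilon>\<^sup>-\<^sup>1\<^sup>/\<^sup>2 log(1/\<epsilon>))\<close> knots: a geometric grid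
  of ratio \<open>1 + \<surd>\<epsilon>/20\<close> at both ends of \<open>{0..n}\<close>, plus the indices at which the slope of \<open>R\<close>,
  measured on a logarithmic scale of the same ratio, changes class. Rounding the values of
  \<open>R\<close> at the knots to multiples of \<open>\<epsilon>\<^sup>2/8\<close> gives the code; the decoded prices \<open>R(j/n)/(j/n)\<close>
  are then within \<open>\<epsilon>/2\<close> of the true quantile prices, which puts the discrete distribution
  on them within L\'evy distance \<open>\<epsilon>\<close>.

  For every \<open>S \<subseteq> {1..N}\<close>, \<open>N \<approx> (20\<epsilon>)\<^sup>-\<^sup>1\<^sup>/\<^sup>2\<close>, let the sale probability be
  \<open>1/(1 + h\<^sub>S(v))\<close>, where \<open>h\<^sub>S\<close> is the maximum of \<open>0\<close> and the tangents to \<open>v\<^sup>2\<close> at the points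
  \<open>k/(N+1)\<close>, \<open>k \<in> S\<close>. Convexity of \<open>h\<^sub>S\<close> makes these distributions regular, and a point
  of \<open>S\<close> missing from \<open>S'\<close> separates the two distributions by more than \<open>3\<epsilon>\<close>, so no two of
  the \<open>2\<^sup>N\<close> of them share an \<open>\<epsilon>\<close>-approximation.
\<close>

lemma is_cdf_bounds:
  assumes "is_cdf F"
  shows "0 \<le> F v" "F v \<le> 1"
proof -
  have mono: "x \<le> y \<Longrightarrow> F x \<le> F y" for x y
    using assms unfolding is_cdf_def mono_def by auto
  have lim1: "(F \<longlongrightarrow> 1) at_top" and lim0: "(F \<longlongrightarrow> 0) at_bot"
    using assms unfolding is_cdf_def by auto
  have "eventually (\<lambda>y. F v \<le> F y) at_top"
    using eventually_ge_at_top[of v] by eventually_elim (rule mono)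
  from tendsto_lowerbound[OF lim1 this] show "F v \<le> 1" by simp
  have "eventually (\<lambda>y. F y \<le> F v) at_bot"
    using eventually_le_at_bot[of v] by eventually_elim (rule mono)
  from tendsto_upperbound[OF lim0 this] show "0 \<le> F v" by simp
qed

lemma levy_dist_le:
  assumes "0 \<le> e" and "\<And>v. F (v - e) - e \<le> G v" and "\<And>v. G v \<le> F (v + e) + e"
  shows "levy_dist F G \<le> e"
  unfolding levy_dist_def
  by (rule cInf_lower) (use assms in \<open>auto intro: bdd_belowI[where m=0]\<close>)

text \<open>The infimum in the L\'evy distance need not be attained, hence the slack \<open>3/2\<close>.\<close>

lemma levy_dist_le_imp_close:
  assumes F: "is_cdf F" and G: "is_cdf G" and le: "levy_dist F G \<le> e" and e: "e > 0"
  shows "F (v - 3*e/2) - 3*e/2 \<le> G v \<and> G v \<le> F (v + 3*e/2) + 3*e/2"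
proof -
  define A where "A = {e. e \<ge> 0 \<and> (\<forall>v. F (v - e) - e \<le> G v \<and> G v \<le> F (v + e) + e)}"
  have "1 \<in> A"
    unfolding A_def using is_cdf_bounds[OF F] is_cdf_bounds[OF G]
    by (auto simp: diff_le_eq intro: add_increasing2 order.trans[of _ 1])
  then have ne: "A \<noteq> {}" by blast
  have "Inf A < 3*e/2" using le e unfolding levy_dist_def A_def[symmetric] by simp
  then obtain e' where e': "e' \<in> A" "e' < 3*e/2" using cInf_lessD[OF ne] by blast
  have mono: "x \<le> y \<Longrightarrow> F x \<le> F y" for x y using F unfolding is_cdf_def mono_def by auto
  have "F (v - e') - e' \<le> G v" "G v \<le> F (v + e') + e'" using e' unfolding A_def by auto
  moreover have "F (v - 3*e/2) \<le> F (v - e')" "F (v + e') \<le> F (v + 3*e/2)"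
    using e' by (auto intro: mono)
  ultimately show ?thesis using e' by linarith
qed

lemma concave_on_three_point:
  fixes f :: "real \<Rightarrow> real"
  assumes f: "concave_on A f" and "x \<in> A" "y \<in> A" "x < z" "z < y"
  shows "(y - z) * f x + (z - x) * f y \<le> (y - x) * f z"
proof -
  define t where "t = (z - x) / (y - x)"
  have t: "0 \<le> t" "t \<le> 1" and zt: "t * (y - x) = z - x"
    unfolding t_def using assms by auto
  have "(1 - t) *\<^sub>R x + t *\<^sub>R y = z" using zt by (simp add: algebra_simps)
  then have "(1 - t) * f x + t * f y \<le> f z" using concave_onD[OF f t] assms by metis
  then have "(y - x) * ((1 - t) * f x + t * f y) \<le> (y - x) * f z"
    using assms by (intro mult_left_mono) auto
  also have "(y - x) * ((1 - t) * f x + t * f y)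
      = ((y - x) - t * (y - x)) * f x + (t * (y - x)) * f y"
    by (simp add: algebra_simps)
  also have "\<dots> = (y - z) * f x + (z - x) * f y" using zt by simp
  finally show ?thesis .
qed

definition sale_prob :: "(real \<Rightarrow> real) \<Rightarrow> real \<Rightarrow> real" where
  "sale_prob F v = 1 - cdf_left F v"

locale unit_cdf =
  fixes F :: "real \<Rightarrow> real"
  assumes cdf: "is_cdf F" and supp: "supported_01 F"
begin

lemma F_mono: "x \<le> y \<Longrightarrow> F x \<le> F y"
  using cdf unfolding is_cdf_def mono_def by auto

lemma F_nonneg: "0 \<le> F v" and F_le_1: "F v \<le> 1"
  using is_cdf_bounds[OF cdf] by auto

lemma F_eq_1: "1 \<le> v \<Longrightarrow> F v = 1"
  using F_mono[of 1 v] supp F_le_1[of v] unfolding supported_01_def by simp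

lemma F_le_cdf_left: "u < v \<Longrightarrow> F u \<le> cdf_left F v"
  unfolding cdf_left_def
  by (rule cSUP_upper) (auto intro: bdd_aboveI[where M=1] simp: F_le_1)

lemma cdf_left_le_F: "cdf_left F v \<le> F v"
  unfolding cdf_left_def by (rule cSUP_least) (auto intro: F_mono)

lemma cdf_left_least: "(\<And>u. u < v \<Longrightarrow> F u \<le> c) \<Longrightarrow> cdf_left F v \<le> c"
  unfolding cdf_left_def by (rule cSUP_least) auto

lemma cdf_left_nonneg: "0 \<le> cdf_left F v"
  using F_le_cdf_left[of "v - 1" v] F_nonneg[of "v - 1"] by simp

lemma cdf_left_eq_0: "v \<le> 0 \<Longrightarrow> cdf_left F v = 0"
  using cdf_left_least[of v 0] cdf_left_nonneg[of v] supp unfolding supported_01_def by force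

lemma sale_prob_le_1: "sale_prob F v \<le> 1"
  unfolding sale_prob_def using cdf_left_nonneg by auto

definition price_set :: "real \<Rightarrow> real set" where
  "price_set q = {v \<in> {0..1}. sale_prob F v \<ge> q}"

lemma zero_in_price_set: "q \<le> 1 \<Longrightarrow> 0 \<in> price_set q"
  unfolding price_set_def sale_prob_def using cdf_left_eq_0[of 0] by auto

lemma bdd_above_price_set: "bdd_above (price_set q)"
  unfolding price_set_def by (rule bdd_aboveI[where M=1]) auto

lemma price_at_eq_Sup: "price_at F q = Sup (price_set q)"
  unfolding price_at_def price_set_def sale_prob_def by simp

lemma price_at_bounds: "q \<le> 1 \<Longrightarrow> 0 \<le> price_at F q \<and> price_at F q \<le> 1"
  unfolding price_at_eq_Sup
  using cSup_upper[OF zero_in_price_set bdd_above_price_set]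
  by (auto intro!: cSup_least simp: price_set_def dest: zero_in_price_set)

lemma le_price_at: "u \<in> {0..1} \<Longrightarrow> q \<le> sale_prob F u \<Longrightarrow> u \<le> price_at F q"
  unfolding price_at_eq_Sup by (rule cSup_upper) (auto simp: price_set_def bdd_above_price_set)

lemma sale_prob_less_if_above_price: "u \<in> {0..1} \<Longrightarrow> price_at F q < u \<Longrightarrow> sale_prob F u < q"
  using le_price_at[of u q] by linarith

lemma price_at_antimono: "q \<le> q' \<Longrightarrow> q' \<le> 1 \<Longrightarrow> price_at F q' \<le> price_at F q"
  unfolding price_at_eq_Sup
  by (rule cSup_subset_mono)
    (use zero_in_price_set[of q'] in \<open>blast, auto simp: price_set_def bdd_above_price_set\<close>)

lemma price_at_approx:
  "q \<le> 1 \<Longrightarrow> d > 0 \<Longrightarrow> \<exists>u\<in>{0..1}. q \<le> sale_prob F u \<and> price_at F q - d < u"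
  using less_cSupD[of "price_set q" "Sup (price_set q) - d"] zero_in_price_set[of q]
  unfolding price_at_eq_Sup by (force simp: price_set_def)

lemma revenue_curve_bounds: "q \<in> {0..1} \<Longrightarrow> 0 \<le> revenue_curve F q \<and> revenue_curve F q \<le> q"
  using price_at_bounds[of q] unfolding revenue_curve_def
  by (auto intro: mult_left_le)

text \<open>Weighting the two prices by revenue makes \<open>q * w\<close> the averaged revenue; that the price
  \<open>w\<close> still sells with probability \<open>q\<close> then gives \<open>q * w \<le> R(q)\<close>, i.e. concavity of \<open>R\<close>.\<close>

lemma myerson_regularI:
  assumes avg: "\<And>v1 v2 q1 q2 l. v1 \<in> {0..1} \<Longrightarrow> v2 \<in> {0..1} \<Longrightarrow> 0 \<le> q1 \<Longrightarrow> 0 \<le> q2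
     \<Longrightarrow> 0 \<le> l \<Longrightarrow> l \<le> 1 \<Longrightarrow> q1 \<le> sale_prob F v1 \<Longrightarrow> q2 \<le> sale_prob F v2
     \<Longrightarrow> 0 < l*q1 + (1-l)*q2
     \<Longrightarrow> l*q1 + (1-l)*q2 \<le> sale_prob F ((l*q1 * v1 + (1-l)*q2 * v2) / (l*q1 + (1-l)*q2))"
  shows "myerson_regular F"
  unfolding myerson_regular_def
proof (rule concave_on_linorderI)
  show "convex {0..1::real}" by simp
  fix t x y :: real
  assume t: "0 < t" "t < 1" and x: "x \<in> {0..1}" and y: "y \<in> {0..1}" and xy: "x < y"
  define q where "q = (1-t)*x + t*y"
  have "(1-t)*x \<le> 1-t" "t*y \<le> t" using t x y by (auto intro: mult_left_le)
  moreover have "0 \<le> (1-t)*x" "0 < t*y" using t x y xy by auto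
  ultimately have q: "0 < q" "q \<le> 1" unfolding q_def by linarith+
  have "(1-t) * (x * price_at F x) + t * (y * price_at F y) \<le> q * price_at F q"
  proof (rule field_le_epsilon)
    fix d :: real assume d: "d > 0"
    obtain u1 where u1: "u1 \<in> {0..1}" "x \<le> sale_prob F u1" "price_at F x - d < u1"
      using price_at_approx[of x d] x d by auto
    obtain u2 where u2: "u2 \<in> {0..1}" "y \<le> sale_prob F u2" "price_at F y - d < u2"
      using price_at_approx[of y d] y d by auto
    define w where "w = ((1-t)*x*u1 + t*y*u2) / q"
    have qq: "(1-t)*x + (1-(1-t))*y = q" unfolding q_def by simp
    have "q \<le> sale_prob F w"
      using avg[of u1 u2 x y "1-t"] u1 u2 x y t q qq unfolding w_def by auto
    moreover have "(1-t)*x*u1 \<le> (1-t)*x" "t*y*u2 \<le> t*y" "0 \<le> (1-t)*x*u1 + t*y*u2"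
      using u1 u2 t x y by (auto intro: mult_left_le)
    then have "w \<in> {0..1}" using q unfolding w_def q_def by (auto simp: divide_le_eq_1)
    ultimately have "q * w \<le> q * price_at F q" using q by (simp add: le_price_at)
    moreover have "q * w = (1-t)*x*u1 + t*y*u2" unfolding w_def using q by simp
    moreover have "(1-t)*x*(price_at F x - d) \<le> (1-t)*x*u1" "t*y*(price_at F y - d) \<le> t*y*u2"
      using u1 u2 t x y by (auto intro: mult_left_mono)
    moreover have "(1-t)*x*d + t*y*d \<le> d"
      using q d mult_left_le_one_le[of d q] by (simp add: q_def algebra_simps)
    ultimately show "(1-t) * (x * price_at F x) + t * (y * price_at F y) \<le> q * price_at F q + d"
      by (simp add: algebra_simps)
  qed
  then show "(1-t) * revenue_curve F x + t * revenue_curve F y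
      \<le> revenue_curve F ((1-t) *\<^sub>R x + t *\<^sub>R y)"
    unfolding revenue_curve_def q_def by simp
qed

lemma myerson_regular_if_odds_convex:
  fixes h :: "real \<Rightarrow> real"
  assumes odds: "\<And>v. v \<in> {0..1} \<Longrightarrow> sale_prob F v = 1 / (1 + h v)"
    and h_nonneg: "\<And>v. 0 \<le> h v"
    and h_convex: "\<And>m a b. 0 \<le> m \<Longrightarrow> m \<le> 1 \<Longrightarrow> h (m*a + (1-m)*b) \<le> m * h a + (1-m) * h b"
  shows "myerson_regular F"
proof (rule myerson_regularI)
  fix v1 v2 q1 q2 l :: real
  assume v1: "v1 \<in> {0..1}" and v2: "v2 \<in> {0..1}" and q1: "0 \<le> q1" and q2: "0 \<le> q2"
    and l: "0 \<le> l" "l \<le> 1" and T1: "q1 \<le> sale_prob F v1" and T2: "q2 \<le> sale_prob F v2"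
    and qpos: "0 < l*q1 + (1-l)*q2"
  define q where "q = l*q1 + (1-l)*q2"
  define m where "m = l*q1 / q"
  have qm: "q * m = l*q1" and qm': "q * (1-m) = (1-l)*q2"
    using qpos unfolding m_def q_def by (auto simp: field_simps)
  have m: "0 \<le> m" "m \<le> 1"
    using qpos l q1 q2 unfolding m_def q_def by (auto simp: field_simps mult_left_le_one_le)
  define w where "w = m * v1 + (1-m) * v2"
  have "0 \<le> m * v1" "m * v1 \<le> m" "0 \<le> (1-m) * v2" "(1-m) * v2 \<le> 1-m"
    using m v1 v2 by (auto intro: mult_left_le)
  then have w: "w \<in> {0..1}" unfolding w_def by auto
  have "q * w = (q*m) * v1 + (q*(1-m)) * v2" unfolding w_def by (simp add: algebra_simps)
  then have "q * w = l*q1 * v1 + (1-l)*q2 * v2" unfolding qm qm' .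
  then have weq: "(l*q1 * v1 + (1-l)*q2 * v2) / q = w"
    using qpos unfolding q_def by (simp add: field_simps)
  have c1: "q1 * (1 + h v1) \<le> 1" and c2: "q2 * (1 + h v2) \<le> 1"
    using T1 T2 odds[OF v1] odds[OF v2] h_nonneg[of v1] h_nonneg[of v2]
    by (simp_all add: le_divide_eq)
  have "q * (1 + h w) \<le> q * (1 + (m * h v1 + (1-m) * h v2))"
    using h_convex[OF m, of v1 v2] qpos unfolding w_def q_def by simp
  also have "\<dots> = q + (q*m) * h v1 + (q*(1-m)) * h v2" by (simp add: algebra_simps)
  also have "\<dots> = q + l*q1 * h v1 + (1-l)*q2 * h v2" unfolding qm qm' ..
  also have "\<dots> = l * (q1 * (1 + h v1)) + (1-l) * (q2 * (1 + h v2))"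
    unfolding q_def by (simp add: algebra_simps)
  also have "\<dots> \<le> l * 1 + (1-l) * 1"
    using c1 c2 l by (intro add_mono mult_left_mono) auto
  finally have "q \<le> 1 / (1 + h w)" using h_nonneg[of w] by (simp add: field_simps)
  then show "l*q1 + (1-l)*q2 \<le> sale_prob F ((l*q1 * v1 + (1-l)*q2 * v2) / (l*q1 + (1-l)*q2))"
    using odds[OF w] weq unfolding q_def by simp
qed

end

definition empirical_cdf :: "nat \<Rightarrow> (nat \<Rightarrow> real) \<Rightarrow> real \<Rightarrow> real" where
  "empirical_cdf n p v = real (card {j \<in> {1..n}. p j \<le> v}) / real n"

lemma is_cdf_empirical_cdf:
  assumes n: "n \<ge> 1"
  shows "is_cdf (empirical_cdf n p)"
  unfolding is_cdf_def
proof (intro conjI allI)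
  show "mono (empirical_cdf n p)"
    unfolding mono_def empirical_cdf_def by (auto intro!: divide_right_mono card_mono)
next
  fix x
  have "eventually (\<lambda>y. p j \<le> y \<longleftrightarrow> p j \<le> x) (at_right x)" for j
  proof (cases "p j \<le> x")
    case True
    show ?thesis using eventually_at_right_less[of x] by eventually_elim (use True in auto)
  next
    case False
    then have "eventually (\<lambda>y. y < p j) (at_right x)"
      unfolding eventually_at_right_field by (intro exI[of _ "p j"]) auto
    then show ?thesis by eventually_elim (use False in auto)
  qed
  then have "eventually (\<lambda>y. \<forall>j\<in>{1..n}. p j \<le> y \<longleftrightarrow> p j \<le> x) (at_right x)"
    by (intro eventually_ball_finite) auto
  then have "eventually (\<lambda>y. empirical_cdf n p y = empirical_cdf n p x) (at_right x)"
    by eventually_elim (auto simp: empirical_cdf_def intro!: arg_cong[where f=card])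
  then show "continuous (at_right x) (empirical_cdf n p)"
    unfolding continuous_within by (rule tendsto_eventually)
next
  have "eventually (\<lambda>y. \<forall>j\<in>{1..n}. y < p j) at_bot"
    by (rule eventually_ball_finite) (auto intro: eventually_gt_at_bot)
  then have "eventually (\<lambda>y. empirical_cdf n p y = 0) at_bot"
    by eventually_elim (force simp: empirical_cdf_def)
  then show "(empirical_cdf n p \<longlongrightarrow> 0) at_bot" by (rule tendsto_eventually)
next
  have "eventually (\<lambda>y. \<forall>j\<in>{1..n}. p j \<le> y) at_top"
    by (rule eventually_ball_finite) (auto intro: eventually_ge_at_top)
  then have "eventually (\<lambda>y. empirical_cdf n p y = 1) at_top"
  proof eventually_elim
    case (elim y)
    then have "{j \<in> {1..n}. p j \<le> y} = {1..n}" by auto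
    then show ?case using n by (simp add: empirical_cdf_def)
  qed
  then show "(empirical_cdf n p \<longlongrightarrow> 1) at_top" by (rule tendsto_eventually)
qed

lemma indices_above_eq: "y \<ge> 0 \<Longrightarrow> {j \<in> {1..n}. y < real j} = {nat \<lfloor>y\<rfloor> + 1..n}"
proof -
  assume y: "y \<ge> 0"
  have iff: "y < real j \<longleftrightarrow> nat \<lfloor>y\<rfloor> < j" for j :: nat
  proof -
    have "y < real j \<longleftrightarrow> \<lfloor>y\<rfloor> < int j" by (simp add: floor_less_iff)
    also have "\<dots> \<longleftrightarrow> nat \<lfloor>y\<rfloor> < j" using y by linarith
    finally show ?thesis .
  qed
  show ?thesis
  proof (intro set_eqI)
    fix j
    show "j \<in> {j \<in> {1..n}. y < real j} \<longleftrightarrow> j \<in> {nat \<lfloor>y\<rfloor> + 1..n}"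
      unfolding mem_Collect_eq atLeastAtMost_iff iff[of j] by linarith
  qed
qed

lemma card_indices_above_le: "real (card {j \<in> {1..n}. y < real j}) \<le> max 0 (real n - y + 1)"
proof (cases "y \<ge> 0")
  case True
  have c: "card {j \<in> {1..n}. y < real j} = n - nat \<lfloor>y\<rfloor>" using indices_above_eq[OF True] by simp
  have "real (nat \<lfloor>y\<rfloor>) > y - 1" using True by linarith
  then show ?thesis unfolding c by (cases "nat \<lfloor>y\<rfloor> \<le> n") (auto simp: of_nat_diff)
next
  case False
  then have "{j \<in> {1..n}. y < real j} = {1..n}" by auto
  moreover have "real n \<le> max 0 (real n - y + 1)" using False by linarith
  ultimately show ?thesis by simp
qed

lemma card_indices_above_ge:
  assumes "y \<ge> 0"
  shows "real n - y - 1 \<le> real (card {j \<in> {1..n}. y < real j})"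
proof -
  have c: "card {j \<in> {1..n}. y < real j} = n - nat \<lfloor>y\<rfloor>" using indices_above_eq[OF assms] by simp
  have "real (nat \<lfloor>y\<rfloor>) \<le> y" using assms by linarith
  then show ?thesis unfolding c by (cases "nat \<lfloor>y\<rfloor> \<le> n") (auto simp: of_nat_diff)
qed

lemma empirical_cdf_le_1:
  assumes "n \<ge> 1"
  shows "empirical_cdf n p v \<le> 1"
proof -
  have "card {j \<in> {1..n}. p j \<le> v} \<le> card {1..n}" by (rule card_mono) auto
  then show ?thesis unfolding empirical_cdf_def using assms by (simp add: divide_le_eq_1)
qed

context unit_cdf
begin

lemma empirical_cdf_le_shift:
  assumes n: "n \<ge> 1" and e: "e > 0" and ne: "1 / real n \<le> e/4"
    and above: "\<And>j. j \<in> {1..n} \<Longrightarrow> real j / n + e/2 \<le> 1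
        \<Longrightarrow> price_at F (real j / n + e/2) - e/2 \<le> p j"
  shows "empirical_cdf n p v \<le> F (v + e) + e"
proof (cases "v + e \<ge> 1")
  case True
  then show ?thesis using empirical_cdf_le_1[OF n, of p v] F_eq_1[of "v+e"] e by simp
next
  case False
  define u where "u = v + e"
  have np: "real n > 0" using n by simp
  have sub: "{j \<in> {1..n}. p j \<le> v} \<subseteq> {j \<in> {1..n}. real n * (sale_prob F u - e/2) < real j}"
  proof safe
    fix j assume j: "j \<in> {1..n}" "p j \<le> v"
    have "sale_prob F u - e/2 < real j / n"
    proof (cases "real j / n + e/2 \<le> 1")
      case True
      have lt: "price_at F (real j / n + e/2) < u" using above[OF j(1) True] j u_def e by simp
      moreover have "u \<in> {0..1}"
        using price_at_bounds[OF True] lt False unfolding u_def by auto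
      ultimately show ?thesis using sale_prob_less_if_above_price by fastforce
    qed (use sale_prob_le_1[of u] in simp)
    then show "real n * (sale_prob F u - e/2) < real j" using np by (simp add: field_simps)
  qed
  have "real (card {j \<in> {1..n}. p j \<le> v})
      \<le> real (card {j \<in> {1..n}. real n * (sale_prob F u - e/2) < real j})"
    by (intro of_nat_mono card_mono sub) auto
  also have "\<dots> \<le> max 0 (real n - real n * (sale_prob F u - e/2) + 1)"
    by (rule card_indices_above_le)
  also have "\<dots> = real n * max 0 (1 - (sale_prob F u - e/2) + 1 / real n)"
    using np by (simp add: max_mult_distrib_left algebra_simps)
  also have "\<dots> \<le> real n * (F u + e)"
  proof -
    have "1 - (sale_prob F u - e/2) + 1 / real n \<le> F u + e"
      using ne e cdf_left_le_F[of u] unfolding sale_prob_def by linarith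
    then show ?thesis using np F_nonneg[of u] e by (intro mult_left_mono) auto
  qed
  finally show ?thesis using np unfolding empirical_cdf_def u_def by (simp add: field_simps)
qed

lemma empirical_cdf_ge_shift:
  assumes n: "n \<ge> 1" and e: "e > 0" and ne: "1 / real n \<le> e/4"
    and below: "\<And>j. j \<in> {1..n} \<Longrightarrow> 0 < real j / n - e/2
        \<Longrightarrow> p j \<le> price_at F (real j / n - e/2) + e/2"
  shows "F (v - e) - e \<le> empirical_cdf n p v"
proof -
  define s where "s = F (v - e)"
  have np: "real n > 0" using n by simp
  have s1: "s \<le> 1" unfolding s_def by (rule F_le_1)
  have sub: "{j \<in> {1..n}. real n * (1 - s + e/2) < real j} \<subseteq> {j \<in> {1..n}. p j \<le> v}"
  proof safe
    fix j assume j: "j \<in> {1..n}" "real n * (1 - s + e/2) < real j"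
    define q where "q = real j / n - e/2"
    have qgt: "q > 1 - s" using j np unfolding q_def by (simp add: field_simps)
    have "real j / n \<le> 1" using j np by (simp add: divide_le_eq_1)
    then have q1: "q \<le> 1" using e unfolding q_def by simp
    have "price_at F q \<le> v - e"
      unfolding price_at_eq_Sup
    proof (rule cSup_least)
      show "price_set q \<noteq> {}" using zero_in_price_set[OF q1] by blast
      fix u assume "u \<in> price_set q"
      then have "q \<le> 1 - cdf_left F u" unfolding price_set_def sale_prob_def by auto
      then show "u \<le> v - e"
        using F_le_cdf_left[of "v - e" u] qgt unfolding s_def by (cases "v - e < u") auto
    qed
    moreover have "p j \<le> price_at F q + e/2"
      using below[OF j(1)] qgt s1 unfolding q_def by (simp del: diff_gt_0_iff_gt)
    ultimately show "p j \<le> v" using e by simp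
  qed
  have "real n * (s - e/2 - 1 / real n) = real n - real n * (1 - s + e/2) - 1"
    using np by (simp add: algebra_simps)
  also have "\<dots> \<le> real (card {j \<in> {1..n}. real n * (1 - s + e/2) < real j})"
    using e s1 by (intro card_indices_above_ge) auto
  also have "\<dots> \<le> real (card {j \<in> {1..n}. p j \<le> v})"
    by (intro of_nat_mono card_mono sub) auto
  finally have "s - e/2 - 1 / real n \<le> empirical_cdf n p v"
    using np unfolding empirical_cdf_def by (simp add: field_simps)
  then show ?thesis unfolding s_def using ne e by simp
qed

end

locale concave_seq =
  fixes n :: nat and r :: "nat \<Rightarrow> real"
  assumes n2: "n \<ge> 2"
    and concave: "\<And>i j k. i < j \<Longrightarrow> j < k \<Longrightarrow> k \<le> n
      \<Longrightarrow> real (k-j) * r i + real (j-i) * r k \<le> real (k-i) * r j"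
    and bounds: "\<And>k. k \<le> n \<Longrightarrow> 0 \<le> r k \<and> r k \<le> real k / real n"
begin

definition slope :: "nat \<Rightarrow> real" where
  "slope k = r (Suc k) - r k"

lemma r_0: "r 0 = 0" using bounds[of 0] by simp

lemma r_le_1: assumes "k \<le> n" shows "r k \<le> 1"
proof -
  have "real k / real n \<le> 1" using assms n2 by (intro divide_le_eq_1_pos[THEN iffD2]) auto
  then show ?thesis using bounds[OF assms] by linarith
qed

lemma slope_Suc_le: "Suc k < n \<Longrightarrow> slope (Suc k) \<le> slope k"
  using concave[of k "Suc k" "Suc (Suc k)"] unfolding slope_def by (simp add: numeral_2_eq_2)

lemma slope_antimono:
  assumes "a \<le> b" "b < n"
  shows "slope b \<le> slope a"
  using assms
proof (induction rule: dec_induct)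
  case (step c)
  then show ?case using slope_Suc_le[of c] by simp
qed simp

lemma slope_le: assumes "k < n" shows "slope k \<le> 1 / real n"
proof (cases "k = 0")
  case True
  then show ?thesis using bounds[of 1] r_0 n2 unfolding slope_def by simp
next
  case False
  have "real (Suc k - k) * r 0 + real (k - 0) * r (Suc k) \<le> real (Suc k - 0) * r k"
    using concave[of 0 k "Suc k"] False assms by simp
  then have "real k * slope k \<le> r k" using r_0 unfolding slope_def by (simp add: algebra_simps)
  also have "\<dots> \<le> real k / real n" using bounds[of k] assms by simp
  finally have "real k * slope k \<le> real k * (1 / real n)" by simp
  then show ?thesis using False by (subst (asm) mult_le_cancel_left_pos) auto
qed

lemma slope_ge: assumes "k < n" shows "-1 \<le> slope k"
proof -
  have "0 \<le> r (Suc k)" using bounds[of "Suc k"] assms by simp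
  moreover have "r k \<le> 1" using r_le_1[of k] assms by simp
  ultimately show ?thesis unfolding slope_def by simp
qed

lemma slope_tail_bound:
  assumes "Suc k < n"
  shows "-1 \<le> real (n - Suc k) * slope k"
proof -
  have "real (n - Suc k) * r k + real (Suc k - k) * r n \<le> real (n - k) * r (Suc k)"
    using concave[of k "Suc k" n] assms by simp
  moreover have "real (n - k) = real (n - Suc k) + 1" using assms by simp
  moreover have "0 \<le> r n" "r (Suc k) \<le> 1" using bounds[of n] r_le_1[of "Suc k"] assms by auto
  ultimately have "real (n - Suc k) * (r k - r (Suc k)) \<le> 1"
    by (simp add: algebra_simps)
  then show ?thesis unfolding slope_def by (simp add: algebra_simps)
qed

lemma r_diff_eq_sum_slope: "a \<le> j \<Longrightarrow> r j - r a = (\<Sum>k\<in>{a..<j}. slope k)"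
  unfolding slope_def by (simp add: sum_Suc_diff')

text \<open>The bounded quantity is \<open>b - a\<close> times the height of \<open>r j\<close> above the chord of \<open>r\<close>
  from \<open>a\<close> to \<open>b\<close>.\<close>

lemma chord_gap:
  assumes "a < j" "j < b" "b \<le> n"
  shows "0 \<le> real (b-a) * r j - real (b-j) * r a - real (j-a) * r b"
    and "real (b-a) * r j - real (b-j) * r a - real (j-a) * r b
      \<le> real (j-a) * real (b-j) * (slope a - slope (b-1))"
proof -
  show "0 \<le> real (b-a) * r j - real (b-j) * r a - real (j-a) * r b"
    using concave[OF assms] by simp
  have s1: "r j - r a \<le> real (j-a) * slope a"
  proof -
    have "(\<Sum>k\<in>{a..<j}. slope k) \<le> real (card {a..<j}) * slope a"
      by (rule sum_bounded_above) (use assms in \<open>auto intro: slope_antimono\<close>)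
    then show ?thesis using r_diff_eq_sum_slope[of a j] assms by simp
  qed
  have s2: "r b - r j \<ge> real (b-j) * slope (b-1)"
  proof -
    have "(\<Sum>k\<in>{j..<b}. slope k) \<ge> real (card {j..<b}) * slope (b-1)"
      by (rule sum_bounded_below) (use assms in \<open>auto intro: slope_antimono\<close>)
    then show ?thesis using r_diff_eq_sum_slope[of j b] assms by simp
  qed
  have eq: "real (b-a) * r j - real (b-j) * r a - real (j-a) * r b
      = real (b-j) * (r j - r a) - real (j-a) * (r b - r j)"
    using assms by (simp add: of_nat_diff algebra_simps)
  have "real (b-j) * (r j - r a) \<le> real (b-j) * (real (j-a) * slope a)"
    using s1 by (intro mult_left_mono) auto
  moreover have "real (j-a) * (real (b-j) * slope (b-1)) \<le> real (j-a) * (r b - r j)"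
    using s2 by (intro mult_left_mono) auto
  ultimately show "real (b-a) * r j - real (b-j) * r a - real (j-a) * r b
      \<le> real (j-a) * real (b-j) * (slope a - slope (b-1))"
    unfolding eq by (simp add: algebra_simps)
qed

end


lemma geometric_grid_gap:
  fixes th :: real and T n a b :: nat and X :: "nat set"
  assumes th: "0 < th" "th \<le> 1/4" and grid_top: "real n \<le> (1+th)^T"
    and sub: "\<And>t. t \<le> T \<Longrightarrow> nat \<lfloor>(1+th)^t\<rfloor> \<le> n \<Longrightarrow> nat \<lfloor>(1+th)^t\<rfloor> \<in> X"
    and ab: "a < b" and bn: "b \<le> n" and gap: "\<And>x. x \<in> X \<Longrightarrow> \<not> (a < x \<and> x < b)"
  shows "b - a \<le> 1 \<or> real (b-a) < 4*th*a"
proof (rule ccontr)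
  assume H: "\<not> (b - a \<le> 1 \<or> real (b-a) < 4*th*a)"
  then have ba2: "b \<ge> a + 2" by auto
  show False
  proof (cases "a = 0")
    case True
    have "nat \<lfloor>(1+th)^0\<rfloor> \<in> X" using sub[of 0] ba2 bn by simp
    then show False using gap[of 1] True ba2 by simp
  next
    case False
    \<comment> \<open>the first grid point \<open>c\<close> above \<open>a\<close> is at most \<open>(1+th)(a+1)\<close>, and \<open>b \<le> c\<close>\<close>
    define A where "A = {t \<in> {..T}. (1+th)^t < real a + 1}"
    have A0: "0 \<in> A" unfolding A_def using False by simp
    have finA: "finite A" unfolding A_def by simp
    define t0 where "t0 = Max A"
    have t0A: "t0 \<in> A" unfolding t0_def using A0 finA Max_in by blast
    have TA: "T \<notin> A" unfolding A_def using grid_top bn ba2 by auto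
    have t0T: "t0 < T" using t0A TA unfolding A_def by (cases "t0 = T") auto
    have "Suc t0 \<notin> A" using Max_ge[OF finA, of "Suc t0"] unfolding t0_def[symmetric] by auto
    then have c1: "(1+th)^(Suc t0) \<ge> real a + 1" unfolding A_def using t0T by auto
    have c0: "(1+th)^t0 < real a + 1" using t0A unfolding A_def by auto
    define c where "c = nat \<lfloor>(1+th)^(Suc t0)\<rfloor>"
    have "Suc a \<le> c" unfolding c_def by (rule le_nat_floor) (use c1 in simp)
    then have ca: "c > a" by simp
    have cb: "c \<ge> b"
    proof (cases "c \<le> n")
      case True
      then have "c \<in> X" unfolding c_def using sub[of "Suc t0"] t0T by auto
      then show ?thesis using gap[of c] ca by auto
    next
      case False then show ?thesis using bn by simp
    qed
    have "real c \<le> (1+th)^(Suc t0)" unfolding c_def using th by simp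
    also have "\<dots> = (1+th) * (1+th)^t0" by simp
    also have "\<dots> \<le> (1+th) * (real a + 1)" using c0 th by (intro mult_left_mono) auto
    finally have "real b \<le> (1+th) * (real a + 1)" using cb by linarith
    then have bb: "real b \<le> real a + 1 + th * real a + th" by (simp add: algebra_simps)
    have "real (b - a) = real b - real a" using ab by simp
    then have "real (b-a) \<ge> 4*th*real a" using H by auto
    moreover have "real (b - a) \<ge> 2" using ba2 by simp
    moreover have "th * real a \<ge> th" using False th by simp
    ultimately show False using bb \<open>real (b - a) = real b - real a\<close> th by linarith
  qed
qed

locale concave_seq_knots = concave_seq +
  fixes th :: real and T :: nat
  assumes th: "0 < th" "th \<le> 1/4" and grid_top: "real n \<le> (1+th)^T"
begin

definition grid_low :: "nat set" where
  "grid_low = (\<lambda>t. nat \<lfloor>(1+th)^t\<rfloor>) ` {..T} \<inter> {..n}"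

definition grid_high :: "nat set" where
  "grid_high = (\<lambda>x. n - x) ` grid_low"

definition scaled_slope :: "nat \<Rightarrow> real" where
  "scaled_slope k = real n * slope k"

text \<open>The scaled slopes lie in \<open>[-n, 1]\<close>, so \<open>2 - scaled_slope k \<in> [1, n + 2]\<close>; classes are
  the cells of a logarithmic scale of ratio \<open>exp th\<close> on that interval, of which there are
  \<open>O(ln n / th)\<close>.\<close>

definition slope_class :: "nat \<Rightarrow> int" where
  "slope_class k = \<lfloor>- ln (2 - scaled_slope k) / th\<rfloor>"

definition class_changes :: "nat set" where
  "class_changes = {k \<in> {1..n-1}. slope_class k \<noteq> slope_class (k-1)}"

text \<open>The two grids make every gap between consecutive knots short compared with its distance
  to either end of \<open>{0..n}\<close>; the class changes keep the slope almost constant across a gap.\<close>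

definition knots :: "nat set" where
  "knots = {0, n} \<union> grid_low \<union> grid_high \<union> class_changes"

lemma knots_subset: "knots \<subseteq> {..n}"
proof -
  have "grid_low \<subseteq> {..n}" unfolding grid_low_def by blast
  moreover have "grid_high \<subseteq> {..n}" unfolding grid_high_def by auto
  moreover have "class_changes \<subseteq> {..n}" unfolding class_changes_def by auto
  ultimately show ?thesis unfolding knots_def by auto
qed

lemma finite_knots: "finite knots"
  using knots_subset finite_subset by blast

lemma zero_in_knots: "0 \<in> knots" and n_in_knots: "n \<in> knots" unfolding knots_def by auto

lemma knot_gap_low:
  assumes ab: "a < b" "b \<le> n" and gap: "\<And>x. x \<in> knots \<Longrightarrow> \<not> (a < x \<and> x < b)"
  shows "b - a \<le> 1 \<or> real (b-a) < 4*th*a"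
proof (rule geometric_grid_gap[OF th grid_top _ ab gap, where X=knots])
  fix t assume "t \<le> T" "nat \<lfloor>(1+th)^t\<rfloor> \<le> n"
  then have "nat \<lfloor>(1+th)^t\<rfloor> \<in> grid_low" unfolding grid_low_def by blast
  then show "nat \<lfloor>(1+th)^t\<rfloor> \<in> knots" unfolding knots_def by blast
qed

lemma knot_gap_high:
  assumes ab: "a < b" "b \<le> n" and gap: "\<And>x. x \<in> knots \<Longrightarrow> \<not> (a < x \<and> x < b)"
  shows "b - a \<le> 1 \<or> real (b-a) < 4*th*(n-b)"
proof -
  have "(n - a) - (n - b) \<le> 1 \<or> real ((n - a) - (n - b)) < 4*th*(n-b)"
  proof (rule geometric_grid_gap[OF th grid_top, where X="(\<lambda>x. n - x) ` knots"])
    fix t assume t: "t \<le> T" "nat \<lfloor>(1+th)^t\<rfloor> \<le> n"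
    then have "nat \<lfloor>(1+th)^t\<rfloor> \<in> grid_low" unfolding grid_low_def by blast
    then have "n - nat \<lfloor>(1+th)^t\<rfloor> \<in> grid_high" unfolding grid_high_def by blast
    then have "n - nat \<lfloor>(1+th)^t\<rfloor> \<in> knots" unfolding knots_def by blast
    then show "nat \<lfloor>(1+th)^t\<rfloor> \<in> (\<lambda>x. n - x) ` knots" using t(2)
      by (intro image_eqI[of _ _ "n - nat \<lfloor>(1+th)^t\<rfloor>"]) auto
  next
    fix x assume "x \<in> (\<lambda>x. n - x) ` knots"
    then obtain y where y: "y \<in> knots" "x = n - y" by auto
    then have "y \<le> n" using knots_subset by auto
    then show "\<not> (n - b < x \<and> x < n - a)" using gap[OF y(1)] y ab by auto
  qed (use ab in auto)
  moreover have "(n - a) - (n - b) = b - a" using ab by simp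
  ultimately show ?thesis by simp
qed

lemma scaled_slope_le_1: "k < n \<Longrightarrow> scaled_slope k \<le> 1"
  using slope_le[of k] n2 mult_left_mono[of "slope k" "1 / real n" "real n"]
  unfolding scaled_slope_def by simp

lemma scaled_slope_ge: "k < n \<Longrightarrow> - real n \<le> scaled_slope k"
  using slope_ge[of k] mult_left_mono[of "-1" "slope k" "real n"]
  unfolding scaled_slope_def by simp

lemma scaled_slope_antimono: "a \<le> b \<Longrightarrow> b < n \<Longrightarrow> scaled_slope b \<le> scaled_slope a"
  using slope_antimono unfolding scaled_slope_def by (simp add: mult_left_mono)

lemma slope_class_antimono:
  assumes "a \<le> b" "b < n"
  shows "slope_class b \<le> slope_class a"
proof -
  have "ln (2 - scaled_slope a) \<le> ln (2 - scaled_slope b)"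
    using scaled_slope_antimono[OF assms] scaled_slope_le_1[of a] assms by simp
  then have "- ln (2 - scaled_slope b) / th \<le> - ln (2 - scaled_slope a) / th"
    using th by (simp add: divide_right_mono)
  then show ?thesis unfolding slope_class_def by (rule floor_mono)
qed

lemma slope_class_bounds:
  assumes "k < n"
  shows "\<lfloor>- ln (real n + 2) / th\<rfloor> \<le> slope_class k" "slope_class k \<le> 0"
proof -
  have k: "1 \<le> 2 - scaled_slope k" "2 - scaled_slope k \<le> real n + 2"
    using scaled_slope_le_1[OF assms] scaled_slope_ge[OF assms] by auto
  then have "ln (2 - scaled_slope k) \<le> ln (real n + 2)" by simp
  then have "- ln (real n + 2) / th \<le> - ln (2 - scaled_slope k) / th"
    using th by (simp add: divide_right_mono)
  then show "\<lfloor>- ln (real n + 2) / th\<rfloor> \<le> slope_class k"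
    unfolding slope_class_def by (rule floor_mono)
  have "- ln (2 - scaled_slope k) / th \<le> 0" using k th by (simp add: divide_nonpos_pos)
  then show "slope_class k \<le> 0" unfolding slope_class_def by linarith
qed

lemma slope_class_const_between_knots:
  assumes ab: "a < b" "b < n" and gap: "\<And>x. x \<in> knots \<Longrightarrow> \<not> (a < x \<and> x < b)"
  shows "slope_class (b - 1) = slope_class a"
proof -
  have "a \<le> b - 1" using ab by simp
  then show ?thesis
  proof (induction rule: dec_induct)
    case (step c)
    then have "Suc c \<notin> class_changes" using gap[of "Suc c"] unfolding knots_def by auto
    moreover have "Suc c \<in> {1..n-1}" using step ab by auto
    ultimately show ?case using step.IH unfolding class_changes_def by simp
  qed simp
qed

lemma scaled_slope_drop_le:
  assumes ac: "a \<le> c" "c < n" and eq: "slope_class a = slope_class c"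
  shows "scaled_slope a - scaled_slope c \<le> 2 * th * (2 - scaled_slope c)"
proof -
  define x y where "x = - ln (2 - scaled_slope a) / th" and "y = - ln (2 - scaled_slope c) / th"
  have pos: "0 < 2 - scaled_slope a" "0 < 2 - scaled_slope c"
    using scaled_slope_le_1[of a] scaled_slope_le_1[of c] ac by auto
  have "\<lfloor>x\<rfloor> = \<lfloor>y\<rfloor>" using eq unfolding slope_class_def x_def y_def .
  then have "x - y < 1" by linarith
  also have "x - y = (ln (2 - scaled_slope c) - ln (2 - scaled_slope a)) / th"
    unfolding x_def y_def by (simp add: diff_divide_distrib)
  finally have "ln (2 - scaled_slope c) < th + ln (2 - scaled_slope a)"
    using th by (simp add: pos_divide_less_eq)
  then have "exp (ln (2 - scaled_slope c)) < exp (th + ln (2 - scaled_slope a))" by simp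
  then have "2 - scaled_slope c < exp th * (2 - scaled_slope a)" using pos by (simp add: exp_add)
  also have "\<dots> \<le> (1 + 2 * th) * (2 - scaled_slope a)"
    using exp_bound_lemma[of th] th pos by (intro mult_right_mono) auto
  finally have "scaled_slope a - scaled_slope c < 2 * th * (2 - scaled_slope a)"
    by (simp add: algebra_simps)
  also have "\<dots> \<le> 2 * th * (2 - scaled_slope c)"
    using scaled_slope_antimono[OF ac] th by simp
  finally show ?thesis by simp
qed

lemma slope_class_strict_antimono_on_class_changes:
  assumes "u \<in> class_changes" "v \<in> class_changes" "u < v"
  shows "slope_class v < slope_class u"
proof -
  have v: "1 \<le> v" "v < n" "slope_class v \<noteq> slope_class (v - 1)"
    using assms(2) n2 unfolding class_changes_def by auto
  then have "slope_class v < slope_class (v - 1)" using slope_class_antimono[of "v - 1" v] by simp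
  also have "\<dots> \<le> slope_class u" using assms v by (intro slope_class_antimono) auto
  finally show ?thesis .
qed

lemma card_class_changes_le: "real (card class_changes) \<le> ln (real n + 2) / th + 2"
proof -
  define m where "m = \<lfloor>- ln (real n + 2) / th\<rfloor>"
  have "inj_on slope_class class_changes"
    by (rule linorder_inj_onI') (use slope_class_strict_antimono_on_class_changes in fastforce)
  then have "card class_changes = card (slope_class ` class_changes)" by (simp add: card_image)
  also have "\<dots> \<le> card {m..0}"
  proof (rule card_mono)
    show "slope_class ` class_changes \<subseteq> {m..0}"
    proof
      fix z assume "z \<in> slope_class ` class_changes"
      then obtain k where "k \<in> class_changes" "z = slope_class k" by blast
      moreover have "k < n" using \<open>k \<in> class_changes\<close> n2 unfolding class_changes_def by auto
      ultimately show "z \<in> {m..0}" using slope_class_bounds unfolding m_def by auto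
    qed
  qed simp
  finally have "real (card class_changes) \<le> real (card {m..0})" by simp
  moreover have "0 \<le> ln (real n + 2) / th" using th by simp
  then have "m \<le> 0" unfolding m_def by linarith
  ultimately show ?thesis unfolding m_def by simp linarith
qed

lemma card_knots_le: "real (card knots) \<le> 6 + 2 * real T + ln (real n + 2) / th"
proof -
  have "card grid_low \<le> card ((\<lambda>t. nat \<lfloor>(1+th)^t\<rfloor>) ` {..T})"
    unfolding grid_low_def by (intro card_mono) auto
  also have "\<dots> \<le> T + 1" using card_image_le[of "{..T}"] by simp
  finally have low: "card grid_low \<le> T + 1" .
  have "card grid_high \<le> card grid_low"
    unfolding grid_high_def by (rule card_image_le) (simp add: grid_low_def)
  then have high: "card grid_high \<le> T + 1" using low by simp
  have "card knots \<le> card ({0, n} \<union> grid_low \<union> grid_high) + card class_changes"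
    unfolding knots_def by (rule card_Un_le)
  also have "\<dots> \<le> card {0, n} + card grid_low + card grid_high + card class_changes"
    using card_Un_le[of "{0, n} \<union> grid_low" grid_high] card_Un_le[of "{0, n}" grid_low] by simp
  also have "\<dots> \<le> 2 + (T + 1) + (T + 1) + card class_changes"
    using low high card_insert_le_m1[of 2 "{n}" 0] by (intro add_mono) auto
  finally have "real (card knots) \<le> real (2 + (T + 1) + (T + 1) + card class_changes)"
    by (rule of_nat_mono)
  then show ?thesis using card_class_changes_le by simp
qed

end


definition knot_below :: "nat set \<Rightarrow> nat \<Rightarrow> nat" where
  "knot_below K j = Max {k \<in> K. k \<le> j}"

definition knot_above :: "nat set \<Rightarrow> nat \<Rightarrow> nat" where
  "knot_above K j = Min {k \<in> K. j \<le> k}"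

definition interp :: "nat set \<Rightarrow> (nat \<Rightarrow> real) \<Rightarrow> nat \<Rightarrow> real" where
  "interp K w j = (let a = knot_below K j; b = knot_above K j in
     if a = b then w a else (real (b - j) * w a + real (j - a) * w b) / real (b - a))"

lemma knot_below_above:
  assumes fin: "finite K" and K0: "0 \<in> K" and Kn: "n \<in> K" and jn: "j \<le> n"
  shows "knot_below K j \<in> K" "knot_above K j \<in> K" "knot_below K j \<le> j" "j \<le> knot_above K j"
    "\<And>x. x \<in> K \<Longrightarrow> \<not> (knot_below K j < x \<and> x < knot_above K j)"
proof -
  have f1: "finite {k\<in>K. k \<le> j}" and ne1: "{k\<in>K. k \<le> j} \<noteq> {}" using fin K0 by auto
  have f2: "finite {k\<in>K. j \<le> k}" and ne2: "{k\<in>K. j \<le> k} \<noteq> {}" using fin Kn jn by auto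
  have l: "knot_below K j \<in> {k\<in>K. k \<le> j}" unfolding knot_below_def using Max_in[OF f1 ne1] .
  have h: "knot_above K j \<in> {k\<in>K. j \<le> k}" unfolding knot_above_def using Min_in[OF f2 ne2] .
  show "knot_below K j \<in> K" "knot_above K j \<in> K" "knot_below K j \<le> j" "j \<le> knot_above K j"
    using l h by auto
  show "\<not> (knot_below K j < x \<and> x < knot_above K j)" if x: "x \<in> K" for x
  proof (cases "x \<le> j")
    case True
    then have "x \<le> knot_below K j" unfolding knot_below_def using x f1 by (intro Max_ge) auto
    then show ?thesis by simp
  next
    case False
    then have "knot_above K j \<le> x" unfolding knot_above_def using x f2 by (intro Min_le) auto
    then show ?thesis by simp
  qed
qed

lemma interp_cong:
  assumes "finite K" "0 \<in> K" "n \<in> K" "j \<le> n" and "\<And>k. k \<in> K \<Longrightarrow> w k = w' k"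
  shows "interp K w j = interp K w' j"
  using knot_below_above[OF assms(1-4)] assms(5) unfolding interp_def Let_def by simp

text \<open>The arithmetic core of the interpolation error: \<open>[A, B]\<close> is a gap between consecutive
  knots, \<open>D\<close> the drop of the slope across it and \<open>Z = 2 - n * slope (b - 1)\<close>.\<close>

lemma slope_drop_arith:
  fixes th A B J N D Z :: real
  assumes th: "0 < th" "th \<le> 1/4" and AJB: "0 \<le> A" "A < J" "J < B" "B < N" "2 \<le> B - A"
    and low: "B - A < 4*th*A" and high: "B - A < 4*th*(N - B)"
    and Z: "(N - B) * Z \<le> 2 * (N - B) + N" and D: "0 \<le> D" "D * N \<le> 2 * th * Z"
  shows "(B - A) * D \<le> 96 * th^2 * (J / N)"
proof -
  have NB: "0 < N - B" and Npos: "0 < N" using AJB by auto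
  have "(B - A) * D * N \<le> 96 * th^2 * J"
  proof (cases "2 * B \<le> N")
    case True
    have "(N - B) * Z \<le> (N - B) * 4" using Z True by simp
    then have Z4: "Z \<le> 4" using mult_le_cancel_left_pos[OF NB, of Z 4] by blast
    have "(B - A) * D * N \<le> (B - A) * (2 * th * Z)"
      using D AJB by (simp add: mult.assoc mult_left_mono)
    also have "\<dots> \<le> (B - A) * (2 * th * 4)" using Z4 AJB th by (intro mult_left_mono) auto
    also have "\<dots> \<le> 8 * th * (4 * th * A)" using low th by simp
    also have "\<dots> \<le> 96 * th^2 * J" using AJB th by (simp add: power2_eq_square)
    finally show ?thesis .
  next
    case False
    have "(N - B) * ((B - A) * Z) \<le> (N - B) * (2 * (B - A) + 4 * th * N)"
    proof -
      have "(N - B) * ((B - A) * Z) \<le> (B - A) * (2 * (N - B) + N)"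
        using Z AJB by (simp add: mult.left_commute mult_left_mono)
      also have "\<dots> = 2 * (B - A) * (N - B) + N * (B - A)" by (simp add: algebra_simps)
      also have "\<dots> \<le> 2 * (B - A) * (N - B) + N * (4*th*(N - B))"
        using high Npos by (intro add_left_mono mult_left_mono) auto
      finally show ?thesis by (simp add: algebra_simps)
    qed
    then have "(B - A) * Z \<le> 2 * (B - A) + 4 * th * N" using mult_le_cancel_left_pos[OF NB] by blast
    also have "\<dots> \<le> 12 * th * N"
    proof -
      have "4*th*A \<le> 4*th*N" using th AJB by (intro mult_left_mono) auto
      then have "2 * (B - A) \<le> 2 * (4*th*N)" using low by (smt (verit))
      then show ?thesis by (simp add: algebra_simps)
    qed
    finally have BZ: "(B - A) * Z \<le> 12 * th * N" .
    have "B < 2 * A" using low th AJB mult_left_le_one_le[of A "4*th"] by linarith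
    then have NJ: "N < 4 * J" using False AJB by simp
    have "(B - A) * D * N \<le> 2 * th * ((B - A) * Z)"
      using D AJB mult_left_mono[OF D(2), of "B - A"] by (simp add: algebra_simps)
    also have "\<dots> \<le> 2 * th * (12 * th * N)" using BZ th by (intro mult_left_mono) auto
    also have "\<dots> \<le> 96 * th^2 * J" using NJ th by (simp add: power2_eq_square)
    finally show ?thesis .
  qed
  then show ?thesis using Npos by (simp add: pos_le_divide_eq)
qed

lemma weighted_rounding_error:
  fixes u v rho :: real
  assumes "0 \<le> u" "0 \<le> v" "0 < u + v"
    and "ra - rho \<le> wa" "wa \<le> ra" "rb - rho \<le> wb" "wb \<le> rb"
  shows "- rho \<le> (u * (wa - ra) + v * (wb - rb)) / (u + v)"
    and "(u * (wa - ra) + v * (wb - rb)) / (u + v) \<le> 0"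
proof -
  have "u * (- rho) + v * (- rho) \<le> u * (wa - ra) + v * (wb - rb)"
    using assms by (intro add_mono mult_left_mono) auto
  then show "- rho \<le> (u * (wa - ra) + v * (wb - rb)) / (u + v)"
    using assms(3) by (simp add: le_divide_eq algebra_simps)
  show "(u * (wa - ra) + v * (wb - rb)) / (u + v) \<le> 0"
    using assms by (intro divide_nonpos_pos add_nonpos_nonpos mult_nonneg_nonpos) auto
qed

context concave_seq_knots
begin

lemma slope_drop_between_knots:
  assumes ajb: "a < j" "j < b" "b \<le> n" and gap: "\<And>x. x \<in> knots \<Longrightarrow> \<not> (a < x \<and> x < b)"
  shows "real (b - a) * (slope a - slope (b - 1)) \<le> 96 * th^2 * (real j / real n)"
proof -
  have ab: "a < b" using ajb by simp
  have low: "real b - real a < 4 * th * real a"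
    using knot_gap_low[OF ab ajb(3) gap] ajb by (auto simp: of_nat_diff)
  have high: "real b - real a < 4 * th * (real n - real b)"
    using knot_gap_high[OF ab ajb(3) gap] ajb by (auto simp: of_nat_diff)
  then have bn: "b < n" using ajb by (cases "b = n") auto
  define Z where "Z = 2 - scaled_slope (b - 1)"
  have "slope_class (b - 1) = slope_class a"
    by (rule slope_class_const_between_knots[OF ab bn gap])
  then have "scaled_slope a - scaled_slope (b - 1) \<le> 2 * th * Z"
    unfolding Z_def using scaled_slope_drop_le[of a "b - 1"] ab bn by simp
  then have DN: "(slope a - slope (b - 1)) * real n \<le> 2 * th * Z"
    unfolding scaled_slope_def by (simp add: algebra_simps)
  have "-1 \<le> real (n - Suc (b - 1)) * slope (b - 1)"
    using slope_tail_bound[of "b - 1"] ab bn by simp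
  then have "-1 \<le> (real n - real b) * slope (b - 1)"
    using ab bn by (simp add: of_nat_diff)
  then have "real n * (-1) \<le> real n * ((real n - real b) * slope (b - 1))"
    by (intro mult_left_mono) auto
  also have "\<dots> = (real n - real b) * scaled_slope (b - 1)"
    unfolding scaled_slope_def by (simp add: algebra_simps)
  finally have "(real n - real b) * Z \<le> 2 * (real n - real b) + real n"
    unfolding Z_def by (simp add: algebra_simps)
  moreover have "0 \<le> slope a - slope (b - 1)" using slope_antimono[of a "b - 1"] ab bn by simp
  ultimately have "(real b - real a) * (slope a - slope (b - 1)) \<le> 96 * th^2 * (real j / real n)"
    using ajb bn th low high DN by (intro slope_drop_arith) auto
  then show ?thesis using ab by (simp add: of_nat_diff)
qed

lemma interp_error:
  assumes w: "\<And>k. k \<le> n \<Longrightarrow> r k - rho \<le> w k \<and> w k \<le> r k"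
    and j: "j \<le> n" and rho: "rho \<ge> 0"
  shows "\<bar>interp knots w j - r j\<bar> \<le> 96 * th^2 * (real j / real n) + rho"
proof -
  note kb = knot_below_above[OF finite_knots zero_in_knots n_in_knots j]
  define a where "a = knot_below knots j"
  define b where "b = knot_above knots j"
  have abj: "a \<le> j" "j \<le> b" "b \<le> n" using kb knots_subset unfolding a_def b_def by auto
  have gap: "\<And>x. x \<in> knots \<Longrightarrow> \<not> (a < x \<and> x < b)" using kb(5) unfolding a_def b_def by blast
  have err_nonneg: "0 \<le> 96 * th^2 * (real j / real n)" by simp
  show ?thesis
  proof (cases "a < j \<and> j < b")
    case False
    then have "interp knots w j = w j"
      using abj unfolding interp_def a_def[symmetric] b_def[symmetric] Let_def
      by (auto simp: of_nat_diff)
    then show ?thesis using w[OF j] err_nonneg unfolding abs_le_iff by linarith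
  next
    case True
    then have ajb: "a < j" "j < b" by auto
    define c where "c = real (b - a)"
    let ?D = "slope a - slope (b - 1)"
    have c: "c \<ge> 2" "c = real (b - j) + real (j - a)" using ajb unfolding c_def by linarith+
    define X where "X = c * r j - real (b - j) * r a - real (j - a) * r b"
    define Y where "Y = real (b - j) * (w a - r a) + real (j - a) * (w b - r b)"
    \<comment> \<open>\<open>X / c\<close>: height of \<open>r j\<close> above the chord; \<open>Y / c\<close>: interpolated rounding error\<close>
    have "interp knots w j = (real (b - j) * w a + real (j - a) * w b) / c"
      using ajb unfolding interp_def a_def[symmetric] b_def[symmetric] Let_def c_def by simp
    also have "real (b - j) * w a + real (j - a) * w b = Y - X + c * r j"
      unfolding X_def Y_def c(2) by (simp add: algebra_simps)
    finally have interp_eq: "interp knots w j - r j = Y / c - X / c"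
      using c(1) by (simp add: field_simps)
    have X0: "0 \<le> X" using chord_gap(1)[OF ajb abj(3)] unfolding X_def c_def by simp
    have "X \<le> real (j - a) * real (b - j) * ?D"
      using chord_gap(2)[OF ajb abj(3)] unfolding X_def c_def by simp
    also have "\<dots> \<le> (c * c) * ?D"
      using ajb slope_antimono[of a "b - 1"] abj unfolding c_def
      by (intro mult_right_mono mult_mono) auto
    finally have "X \<le> c * (c * ?D)" by (simp add: mult.assoc)
    then have X: "0 \<le> X / c" "X / c \<le> c * ?D"
      using X0 c(1) by (auto simp: divide_le_eq mult.commute)
    have wab: "r a - rho \<le> w a" "w a \<le> r a" "r b - rho \<le> w b" "w b \<le> r b"
      using w abj by auto
    have "0 < real (b - j) + real (j - a)" using c by linarith
    then have Y: "- rho \<le> Y / c" "Y / c \<le> 0"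
      unfolding Y_def c(2) using weighted_rounding_error[OF _ _ _ wab] by auto
    have "c * ?D \<le> 96 * th^2 * (real j / real n)"
      unfolding c_def by (rule slope_drop_between_knots[OF ajb abj(3) gap])
    then show ?thesis using interp_eq X Y rho err_nonneg unfolding abs_le_iff by linarith
  qed
qed

end

definition grid_size :: "real \<Rightarrow> nat" where
  "grid_size e = nat \<lceil>4/e\<rceil>"

definition class_width :: "real \<Rightarrow> real" where
  "class_width e = sqrt e / 20"

definition grid_steps :: "real \<Rightarrow> nat" where
  "grid_steps e = nat \<lceil>2 * ln (real (grid_size e) + 1) / class_width e\<rceil>"

definition rounding_unit :: "real \<Rightarrow> real" where
  "rounding_unit e = e^2 / 8"

definition max_level :: "real \<Rightarrow> nat" where
  "max_level e = nat \<lceil>8 / e^2\<rceil>"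

text \<open>A code is a finite set \<open>S\<close> of pairs (knot, value at the knot in units of \<open>rounding_unit e\<close>).\<close>

definition code_values :: "real \<Rightarrow> (nat \<times> nat) set \<Rightarrow> nat \<Rightarrow> real" where
  "code_values e S k = rounding_unit e * real (Max (snd ` {x \<in> S. fst x = k}))"

lemma code_values_graph:
  assumes "k \<in> K"
  shows "code_values e ((\<lambda>k. (k, c k)) ` K) k = rounding_unit e * real (c k)"
proof -
  have "{x \<in> (\<lambda>k. (k, c k)) ` K. fst x = k} = {(k, c k)}" using assms by auto
  then show ?thesis unfolding code_values_def by simp
qed

text \<open>Near the two ends the L\'evy conditions on the atoms are one-sided, and the extreme
  prices \<open>1\<close> and \<open>0\<close> satisfy them.\<close>

definition decoded_price :: "real \<Rightarrow> (nat \<times> nat) set \<Rightarrow> nat \<Rightarrow> real" where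
  "decoded_price e S j = (let q = real j / real (grid_size e) in
     if q < e/2 then 1 else if q > 1 - e/2 then 0 else interp (fst ` S) (code_values e S) j / q)"

definition decode :: "real \<Rightarrow> (nat \<times> nat) set \<Rightarrow> real \<Rightarrow> real" where
  "decode e S = empirical_cdf (grid_size e) (decoded_price e S)"

lemma parameter_bounds:
  assumes e: "0 < e" "e \<le> 1"
  shows "grid_size e \<ge> 2" "1 / real (grid_size e) \<le> e/4" "real (grid_size e) \<le> 4/e + 1"
    "0 < class_width e" "class_width e \<le> 1/4" "96 * (class_width e)^2 = (6/25) * e"
    "real (grid_size e) \<le> (1 + class_width e) ^ grid_steps e"
proof -
  have "4/e \<ge> 4" using e by (simp add: field_simps)
  then show n2: "grid_size e \<ge> 2" unfolding grid_size_def by linarith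
  have "real (grid_size e) \<ge> 4/e" unfolding grid_size_def by linarith
  then show "1 / real (grid_size e) \<le> e/4" using e n2 by (simp add: field_simps)
  show "real (grid_size e) \<le> 4/e + 1" unfolding grid_size_def using e by (simp add: of_nat_nat)
  define th where "th = class_width e"
  show th0: "0 < class_width e" unfolding class_width_def using e by simp
  have "sqrt e \<le> 1" using e by simp
  then show th1: "class_width e \<le> 1/4" unfolding class_width_def by linarith
  show "96 * (class_width e)^2 = (6/25) * e"
    unfolding class_width_def using e by (simp add: power_divide)
  define T where "T = grid_steps e"
  have "ln (1 + th) \<ge> th - th^2"
    unfolding th_def using th0 th1 by (intro ln_one_plus_pos_lower_bound) auto
  moreover have "th^2 \<le> th/2" unfolding th_def using th0 th1 by (simp add: power2_eq_square)
  ultimately have ln_th: "ln (1 + th) \<ge> th/2" by simp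
  have "real T \<ge> 2 * ln (real (grid_size e) + 1) / th"
    unfolding T_def grid_steps_def th_def by linarith
  then have "real T * (th/2) \<ge> ln (real (grid_size e) + 1)"
    using th0 unfolding th_def[symmetric] by (simp add: field_simps)
  moreover have "real T * ln (1 + th) \<ge> real T * (th/2)" using ln_th by (intro mult_left_mono) auto
  ultimately have "ln ((1 + th)^T) \<ge> ln (real (grid_size e) + 1)"
    using th0 unfolding th_def[symmetric] by (simp add: ln_realpow)
  then have "(1 + th)^T \<ge> real (grid_size e) + 1"
    using th0 unfolding th_def[symmetric] by (subst (asm) ln_le_cancel_iff) auto
  then show "real (grid_size e) \<le> (1 + class_width e) ^ grid_steps e" unfolding th_def T_def by simp
qed

lemma floor_rounding:
  fixes x rho :: real
  assumes "0 \<le> x" "0 < rho"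
  shows "x - rho \<le> rho * real (nat \<lfloor>x / rho\<rfloor>)" "rho * real (nat \<lfloor>x / rho\<rfloor>) \<le> x"
proof -
  have "real (nat \<lfloor>x / rho\<rfloor>) = of_int \<lfloor>x / rho\<rfloor>" using assms by simp
  then have "x / rho - 1 \<le> real (nat \<lfloor>x / rho\<rfloor>)" "real (nat \<lfloor>x / rho\<rfloor>) \<le> x / rho"
    by linarith+
  then have "rho * (x / rho - 1) \<le> rho * real (nat \<lfloor>x / rho\<rfloor>)"
    "rho * real (nat \<lfloor>x / rho\<rfloor>) \<le> rho * (x / rho)"
    using assms by (intro mult_left_mono; simp)+
  then show "x - rho \<le> rho * real (nat \<lfloor>x / rho\<rfloor>)" "rho * real (nat \<lfloor>x / rho\<rfloor>) \<le> x"
    using assms by (simp_all add: algebra_simps)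
qed

lemma price_error_from_revenue_error:
  fixes e q I P :: real
  assumes e: "0 < e" and q: "e/2 \<le> q" and err: "\<bar>I - q * P\<bar> \<le> (6/25) * e * q + e^2/8"
  shows "\<bar>I / q - P\<bar> \<le> e/2"
proof -
  have qpos: "0 < q" using e q by linarith
  have "e^2/8 = e/4 * (e/2)" by (simp add: power2_eq_square)
  also have "\<dots> \<le> e/4 * q" using q e by (intro mult_left_mono) auto
  then have "e^2/8 \<le> (e * q)/4" by (simp add: power2_eq_square)
  moreover have "0 \<le> e * q" using e qpos by simp
  ultimately have "(6/25) * (e * q) + e^2/8 \<le> (e * q)/2" by linarith
  then have "(6/25) * e * q + e^2/8 \<le> e/2 * q" by (simp add: algebra_simps)
  then have "\<bar>I - q * P\<bar> \<le> e/2 * q" using err by linarith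
  moreover have "I / q - P = (I - q * P) / q" using qpos by (simp add: field_simps)
  ultimately show ?thesis using qpos by (simp add: abs_divide divide_le_eq)
qed

context unit_cdf
begin

lemma revenue_samples_concave_seq:
  assumes reg: "myerson_regular F" and n2: "n \<ge> 2"
  shows "concave_seq n (\<lambda>k. revenue_curve F (real k / real n))"
proof
  have npos: "real n > 0" using n2 by simp
  show "2 \<le> n" by (rule n2)
  fix i j k :: nat assume ijk: "i < j" "j < k" "k \<le> n"
  have "(real k / n - real j / n) * revenue_curve F (real i / n)
      + (real j / n - real i / n) * revenue_curve F (real k / n)
      \<le> (real k / n - real i / n) * revenue_curve F (real j / n)"
    using ijk npos reg unfolding myerson_regular_def
    by (intro concave_on_three_point) (auto simp: divide_le_eq_1 divide_strict_right_mono)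
  then have "real n * ((real k / n - real j / n) * revenue_curve F (real i / n)
      + (real j / n - real i / n) * revenue_curve F (real k / n))
      \<le> real n * ((real k / n - real i / n) * revenue_curve F (real j / n))"
    using npos by (intro mult_left_mono) auto
  moreover have "real n * (real k / n - real j / n) = real (k - j)"
    "real n * (real j / n - real i / n) = real (j - i)"
    "real n * (real k / n - real i / n) = real (k - i)"
    using ijk npos by (auto simp: field_simps of_nat_diff)
  ultimately show "real (k - j) * revenue_curve F (real i / n)
      + real (j - i) * revenue_curve F (real k / n)
      \<le> real (k - i) * revenue_curve F (real j / n)"
    by (simp add: distrib_left mult.assoc[symmetric])
next
  fix k assume "k \<le> n"
  then have "real k / n \<in> {0..1}" using n2 by (auto simp: divide_le_eq_1)
  then show "0 \<le> revenue_curve F (real k / n) \<and> revenue_curve F (real k / n) \<le> real k / real n"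
    using revenue_curve_bounds by blast
qed

definition accurate_code :: "real \<Rightarrow> (nat \<times> nat) set \<Rightarrow> bool" where
  "accurate_code e S \<longleftrightarrow> (\<forall>j \<in> {1..grid_size e}.
     e/2 \<le> real j / real (grid_size e) \<and> real j / real (grid_size e) \<le> 1 - e/2
     \<longrightarrow> \<bar>decoded_price e S j - price_at F (real j / real (grid_size e))\<bar> \<le> e/2)"

lemma decoded_price_ge:
  assumes acc: "accurate_code e S" and e: "0 < e"
    and j: "j \<in> {1..grid_size e}" and q: "real j / real (grid_size e) + e/2 \<le> 1"
  shows "price_at F (real j / real (grid_size e) + e/2) - e/2 \<le> decoded_price e S j"
proof (cases "real j / real (grid_size e) < e/2")
  case True
  then show ?thesis using price_at_bounds[OF q] e by (simp add: decoded_price_def)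
next
  case False
  then have "\<bar>decoded_price e S j - price_at F (real j / real (grid_size e))\<bar> \<le> e/2"
    using acc j q unfolding accurate_code_def by simp
  moreover have "price_at F (real j / real (grid_size e) + e/2)
      \<le> price_at F (real j / real (grid_size e))"
    using q e by (intro price_at_antimono) auto
  ultimately show ?thesis by linarith
qed

lemma decoded_price_le:
  assumes acc: "accurate_code e S" and e: "0 < e"
    and j: "j \<in> {1..grid_size e}" and q: "0 < real j / real (grid_size e) - e/2"
  shows "decoded_price e S j \<le> price_at F (real j / real (grid_size e) - e/2) + e/2"
proof -
  have le1: "real j / real (grid_size e) \<le> 1" using j by (simp add: divide_le_eq_1)
  show ?thesis
  proof (cases "1 - e/2 < real j / real (grid_size e)")
    case True
    then show ?thesis using price_at_bounds[of "real j / real (grid_size e) - e/2"] le1 e q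
      by (simp add: decoded_price_def)
  next
    case False
    then have "\<bar>decoded_price e S j - price_at F (real j / real (grid_size e))\<bar> \<le> e/2"
      using acc j q unfolding accurate_code_def by simp
    moreover have "price_at F (real j / real (grid_size e))
        \<le> price_at F (real j / real (grid_size e) - e/2)"
      using le1 e by (intro price_at_antimono) auto
    ultimately show ?thesis by linarith
  qed
qed

lemma levy_dist_decode_le:
  assumes e: "0 < e" "e \<le> 1" and acc: "accurate_code e S"
  shows "levy_dist F (decode e S) \<le> e"
  unfolding decode_def
proof (rule levy_dist_le)
  have n: "1 \<le> grid_size e" "1 / real (grid_size e) \<le> e/4" using parameter_bounds[OF e] by auto
  show "empirical_cdf (grid_size e) (decoded_price e S) v \<le> F (v + e) + e" for v
    using decoded_price_ge[OF acc e(1)] by (rule empirical_cdf_le_shift[OF n(1) e(1) n(2)])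
  show "F (v - e) - e \<le> empirical_cdf (grid_size e) (decoded_price e S) v" for v
    using decoded_price_le[OF acc e(1)] by (rule empirical_cdf_ge_shift[OF n(1) e(1) n(2)])
qed (use e in simp)

lemma accurate_codeI:
  assumes e: "0 < e" and K: "finite K" "0 \<in> K" "grid_size e \<in> K" and knots_S: "fst ` S = K"
    and values_S: "\<And>k. k \<in> K \<Longrightarrow> code_values e S k = w k"
    and interp_close: "\<And>j. j \<le> grid_size e \<Longrightarrow>
        \<bar>interp K w j - revenue_curve F (real j / real (grid_size e))\<bar>
        \<le> (6/25) * e * (real j / real (grid_size e)) + e^2/8"
  shows "accurate_code e S"
  unfolding accurate_code_def
proof (intro ballI impI)
  fix j assume j: "j \<in> {1..grid_size e}"
  assume "e/2 \<le> real j / real (grid_size e) \<and> real j / real (grid_size e) \<le> 1 - e/2"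
  then have q: "e/2 \<le> real j / real (grid_size e)" "real j / real (grid_size e) \<le> 1 - e/2" by auto
  have "decoded_price e S j = interp K w j / (real j / real (grid_size e))"
    using q interp_cong[OF K, of j "code_values e S" w] j values_S
    unfolding decoded_price_def Let_def knots_S by auto
  then show "\<bar>decoded_price e S j - price_at F (real j / real (grid_size e))\<bar> \<le> e/2"
    using price_error_from_revenue_error[OF e q(1)] interp_close[of j] j
    unfolding revenue_curve_def by simp
qed

lemma exists_short_code:
  assumes reg: "myerson_regular F" and e: "0 < e" "e \<le> 1"
  shows "\<exists>S. S \<subseteq> {..grid_size e} \<times> {..max_level e} \<and> S \<noteq> {}
     \<and> real (card S) \<le> 6 + 2 * real (grid_steps e) + ln (real (grid_size e) + 2) / class_width e
     \<and> levy_dist F (decode e S) \<le> e"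
proof -
  define n where "n = grid_size e"
  define th where "th = class_width e"
  define rho where "rho = rounding_unit e"
  define r where "r k = revenue_curve F (real k / real n)" for k
  note params = parameter_bounds[OF e, folded n_def th_def]
  have rho: "rho > 0" unfolding rho_def rounding_unit_def using e by simp
  interpret concave_seq n r
    unfolding r_def by (rule revenue_samples_concave_seq[OF reg]) (use params in simp)
  interpret concave_seq_knots n r th "grid_steps e"
    by unfold_locales (use params in auto)
  define c where "c k = nat \<lfloor>r k / rho\<rfloor>" for k
  define w where "w k = rho * real (c k)" for k
  have w: "r k - rho \<le> w k \<and> w k \<le> r k" if "k \<le> n" for k
    using floor_rounding[of "r k" rho] bounds[OF that] rho unfolding w_def c_def by auto
  define S where "S = (\<lambda>k. (k, c k)) ` knots"
  have knots_S: "fst ` S = knots" unfolding S_def by force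
  have values_S: "code_values e S k = w k" if "k \<in> knots" for k
    using code_values_graph[OF that] unfolding S_def w_def rho_def .
  have "S \<subseteq> {..n} \<times> {..max_level e}"
  proof
    fix x assume "x \<in> S"
    then obtain k where k: "k \<in> knots" "x = (k, c k)" unfolding S_def by auto
    have kn: "k \<le> n" using k knots_subset by auto
    then have "r k / rho \<le> 8 / e^2"
      using r_le_1[OF kn] rho e unfolding rho_def rounding_unit_def by (simp add: field_simps)
    then have "c k \<le> max_level e" unfolding c_def max_level_def by (intro nat_mono) linarith
    then show "x \<in> {..n} \<times> {..max_level e}" using k kn by auto
  qed
  moreover have "S \<noteq> {}" unfolding S_def using zero_in_knots by auto
  moreover have "real (card S) \<le> real (card knots)"
    unfolding S_def by (intro of_nat_mono card_image_le finite_knots)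
  moreover have "accurate_code e S"
  proof (rule accurate_codeI[OF e(1) finite_knots zero_in_knots _ knots_S values_S],
      fold n_def, rule n_in_knots)
    fix j assume "j \<le> n"
    then show "\<bar>interp knots w j - revenue_curve F (real j / real n)\<bar>
        \<le> (6/25) * e * (real j / real n) + e^2/8"
      using interp_error[of rho w j] w rho params unfolding r_def rho_def rounding_unit_def by auto
  qed
  then have "levy_dist F (decode e S) \<le> e" by (rule levy_dist_decode_le[OF e])
  ultimately show ?thesis
    using card_knots_le unfolding n_def th_def by (intro exI[of _ S]) auto
qed

end

lemma finite_set_as_PiE_image:
  assumes fin: "finite S" and ne: "S \<noteq> {}" and card: "card S \<le> M" and sub: "S \<subseteq> X"
  shows "\<exists>c \<in> {..<M} \<rightarrow>\<^sub>E X. c ` {..<M} = S"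
proof -
  obtain f where f: "bij_betw f {0..<card S} S" using ex_bij_betw_nat_finite[OF fin] by blast
  obtain s0 where s0: "s0 \<in> S" using ne by blast
  define c where "c i = (if i < card S then f i else if i < M then s0 else undefined)" for i
  have "c ` {..<M} = S"
  proof
    show "c ` {..<M} \<subseteq> S" using f s0 unfolding c_def bij_betw_def by auto
    show "S \<subseteq> c ` {..<M}"
    proof
      fix x assume "x \<in> S"
      then obtain i where "i < card S" "f i = x" using f unfolding bij_betw_def by force
      then show "x \<in> c ` {..<M}" using card unfolding c_def by (intro image_eqI[of _ _ i]) auto
    qed
  qed
  moreover have "c \<in> {..<M} \<rightarrow>\<^sub>E X"
  proof (rule PiE_I)
    fix i assume "i \<in> {..<M}"
    then show "c i \<in> X" using \<open>c ` {..<M} = S\<close> sub by blast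
  next
    fix i assume "i \<notin> {..<M}"
    then show "c i = undefined" using card unfolding c_def by auto
  qed
  ultimately show ?thesis by blast
qed

lemma describable_regular_01I:
  assumes e: "0 < e" "e \<le> 1"
    and M: "real M \<ge> 6 + 2 * real (grid_steps e) + ln (real (grid_size e) + 2) / class_width e"
    and b: "((grid_size e + 1) * (max_level e + 1)) ^ M \<le> 2 ^ b"
  shows "describable regular_01 b e"
proof -
  define X where "X = {..grid_size e} \<times> {..max_level e}"
  define C where "C = (\<lambda>c. decode e (c ` {..<M})) ` ({..<M} \<rightarrow>\<^sub>E X)"
  have fin: "finite C" unfolding C_def X_def by (intro finite_imageI finite_PiE) auto
  have "card C \<le> card ({..<M} \<rightarrow>\<^sub>E X)"
    unfolding C_def by (rule card_image_le) (simp add: X_def finite_PiE)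
  also have "\<dots> = ((grid_size e + 1) * (max_level e + 1)) ^ M"
    by (simp add: card_PiE X_def card_cartesian_product)
  finally have card: "card C \<le> 2 ^ b" using b by simp
  have "1 \<le> grid_size e" using parameter_bounds[OF e] by simp
  then have cdfs: "\<forall>G\<in>C. is_cdf G" unfolding C_def decode_def using is_cdf_empirical_cdf by auto
  have "\<exists>G\<in>C. levy_dist F G \<le> e" if F: "F \<in> regular_01" for F
  proof -
    interpret unit_cdf F using F unfolding regular_01_def by unfold_locales auto
    have "myerson_regular F" using F unfolding regular_01_def by simp
    then obtain S where S: "S \<subseteq> X" "S \<noteq> {}"
      "real (card S) \<le> 6 + 2 * real (grid_steps e) + ln (real (grid_size e) + 2) / class_width e"
      "levy_dist F (decode e S) \<le> e"
      using exists_short_code[OF _ e] unfolding X_def by blast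
    have "finite S" using S(1) finite_subset unfolding X_def by blast
    moreover have "real (card S) \<le> real M" using S(3) M by linarith
    ultimately have "\<exists>c \<in> {..<M} \<rightarrow>\<^sub>E X. c ` {..<M} = S"
      using S(1,2) by (intro finite_set_as_PiE_image) simp_all
    then obtain c where "c \<in> {..<M} \<rightarrow>\<^sub>E X" "c ` {..<M} = S" by blast
    then have "decode e S \<in> C" unfolding C_def by force
    then show ?thesis using S(4) by blast
  qed
  then show ?thesis unfolding describable_def using fin card cdfs by blast
qed

lemma real_nat_ceiling_le: "0 \<le> y \<Longrightarrow> real (nat \<lceil>y\<rceil>) \<le> y + 1"
  by (simp add: of_nat_nat)

lemma ln_grid_size_le:
  assumes e: "0 < e" "e < 1/100" and c: "0 < c" "c \<le> 2"
  shows "ln (real (grid_size e) + c) \<le> 2 * ln (1/e)"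
proof -
  have "real (grid_size e) + c \<le> 4/e + 3" using parameter_bounds(3)[of e] e c by simp
  also have "\<dots> \<le> 7/e" using e by (simp add: field_simps)
  also have "\<dots> \<le> 1/e^2" using e by (simp add: field_simps power2_eq_square)
  finally have "ln (real (grid_size e) + c) \<le> ln (1/e^2)" using c by (intro ln_mono) auto
  also have "ln (1/e^2) = 2 * ln (1/e)" using e by (simp add: ln_div ln_realpow)
  finally show ?thesis .
qed

lemma code_length_le:
  assumes e: "0 < e" "e < 1/100"
  shows "real (nat \<lceil>6 + 2 * real (grid_steps e) + ln (real (grid_size e) + 2) / class_width e\<rceil>)
      \<le> 202 * (ln (1/e) / sqrt e)"
proof -
  define x where "x = ln (1/e) / sqrt e"
  have s: "0 < sqrt e" "sqrt e \<le> 1/10"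
    using e real_sqrt_le_mono[of e "1/100"] by (auto simp: real_sqrt_divide)
  have "exp 1 < (272/100 :: real)" by (rule e_less_272)
  moreover have "100 < 1/e" using e by (simp add: field_simps)
  ultimately have "exp 1 \<le> 1/e" by simp
  then have L1: "1 \<le> ln (1/e)" using e by (simp add: ln_ge_iff)
  then have "1 / (1/10) \<le> x" unfolding x_def using s e by (intro frac_le) auto
  then have x10: "10 \<le> x" by simp
  have th: "class_width e = sqrt e / 20" unfolding class_width_def ..
  have "2 * ln (real (grid_size e) + 1) / class_width e \<le> 40 * (2 * ln (1/e)) / sqrt e"
    unfolding th using ln_grid_size_le[OF e, of 1] s by (simp add: divide_right_mono)
  also have "\<dots> = 80 * x" unfolding x_def by simp
  moreover have "0 \<le> 2 * ln (real (grid_size e) + 1) / class_width e" unfolding th using s by simp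
  ultimately have T: "real (grid_steps e) \<le> 80 * x + 1"
    using real_nat_ceiling_le[of "2 * ln (real (grid_size e) + 1) / class_width e"]
    unfolding grid_steps_def by linarith
  have C: "ln (real (grid_size e) + 2) / class_width e \<le> 40 * x"
    unfolding th x_def using ln_grid_size_le[OF e, of 2] s by (simp add: divide_right_mono)
  moreover have "0 \<le> ln (real (grid_size e) + 2) / class_width e" unfolding th using s by simp
  ultimately show ?thesis
    using T x10 real_nat_ceiling_le unfolding x_def[symmetric] by (smt (verit) of_nat_0_le_iff)
qed

lemma code_alphabet_le:
  assumes e: "0 < e" "e < 1/100"
  shows "real ((grid_size e + 1) * (max_level e + 1)) \<le> 1 / e^4"
proof -
  have a: "real (grid_size e + 1) \<le> 6/e"
    using parameter_bounds(3)[of e] e by (simp add: field_simps)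
  have "real (max_level e) \<le> 8 / e^2 + 1" unfolding max_level_def using e by (simp add: of_nat_nat)
  moreover have "1 \<le> 1 / e^2" using e by (simp add: power_le_one)
  ultimately have b: "real (max_level e + 1) \<le> 10 / e^2" by simp
  have "real ((grid_size e + 1) * (max_level e + 1)) \<le> (6/e) * (10/e^2)"
    using a b e by (simp only: of_nat_mult) (intro mult_mono, auto)
  also have "\<dots> = 60 / e^3" by (simp add: power2_eq_square power3_eq_cube)
  also have "\<dots> \<le> 1 / e^4" using e by (simp add: field_simps power_eq_if)
  finally show ?thesis .
qed

lemma describable_regular_01_upper:
  assumes e: "0 < e" "e < 1/100"
  shows "describable regular_01 (nat \<lceil>1300 * e powr (-1/2) * (ln (1/e))^2\<rceil>) e"
proof -
  define L where "L = ln (1/e)"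
  define x where "x = L / sqrt e"
  define M where
    "M = nat \<lceil>6 + 2 * real (grid_steps e) + ln (real (grid_size e) + 2) / class_width e\<rceil>"
  define A where "A = (grid_size e + 1) * (max_level e + 1)"
  define b where "b = nat \<lceil>1300 * e powr (-1/2) * (ln (1/e))^2\<rceil>"
  have L: "0 \<le> L" and x: "0 \<le> x" unfolding x_def L_def using e by simp_all
  have "e powr (-1/2) = 1 / sqrt e" using e by (simp add: powr_minus_divide powr_half_sqrt)
  then have b: "1300 * (L * x) \<le> real b"
    unfolding b_def x_def L_def by (simp add: power2_eq_square) linarith
  have "real (A ^ M) \<le> (1/e^4) ^ M"
    unfolding A_def of_nat_power using code_alphabet_le[OF e] by (intro power_mono) auto
  also have "(1/e^4) ^ M = exp (4 * L * real M)"
  proof -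
    have "exp L = 1/e" unfolding L_def using e by simp
    then have "1/e^4 = exp (real 4 * L)" unfolding exp_of_nat_mult by (simp add: power_one_over)
    then have "(1/e^4) ^ M = exp (real M * (real 4 * L))" by (simp add: exp_of_nat_mult)
    then show ?thesis by (simp add: mult_ac)
  qed
  also have "\<dots> \<le> exp (real b * ln 2)"
  proof -
    have "4 * L * real M \<le> 4 * L * (202 * x)"
      using code_length_le[OF e] L unfolding M_def x_def L_def by (intro mult_left_mono) auto
    also have "\<dots> \<le> (2/3) * (1300 * (L * x))" using L x by simp
    also have "\<dots> \<le> ln 2 * real b"
      using ln2_ge_two_thirds L x b by (intro mult_mono) auto
    finally show ?thesis by (simp add: mult.commute)
  qed
  also have "\<dots> = real (2 ^ b)" by (simp add: exp_of_nat_mult)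
  finally have "A ^ M \<le> 2 ^ b" by (simp only: of_nat_le_iff)
  moreover have "6 + 2 * real (grid_steps e) + ln (real (grid_size e) + 2) / class_width e \<le> real M"
    unfolding M_def by linarith
  ultimately show ?thesis unfolding b_def[symmetric] A_def
    using e by (intro describable_regular_01I) auto
qed

definition tangent :: "real \<Rightarrow> real \<Rightarrow> real" where
  "tangent t v = 2 * t * v - t^2"

lemma tangent_eq: "tangent t s = s^2 - (s - t)^2"
  unfolding tangent_def by (simp add: algebra_simps power2_eq_square)

lemma tangent_lipschitz:
  assumes "0 \<le> t" "t \<le> 1"
  shows "tangent t u \<le> tangent t v + 2 * \<bar>u - v\<bar>"
proof -
  have "t * (u - v) \<le> t * \<bar>u - v\<bar>" using assms by (intro mult_left_mono) auto
  also have "\<dots> \<le> \<bar>u - v\<bar>" using assms by (intro mult_left_le_one_le) auto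
  finally have "2 * (t * (u - v)) \<le> 2 * \<bar>u - v\<bar>" by simp
  moreover have "tangent t u = tangent t v + 2 * (t * (u - v))"
    unfolding tangent_def by (simp add: algebra_simps)
  ultimately show ?thesis by simp
qed

lemma tangent_mono: "0 \<le> t \<Longrightarrow> u \<le> v \<Longrightarrow> tangent t u \<le> tangent t v"
  unfolding tangent_def by (simp add: mult_left_mono)

lemma tangent_affine: "tangent t (m * a + (1 - m) * b) = m * tangent t a + (1 - m) * tangent t b"
  unfolding tangent_def by (simp add: algebra_simps)

lemma tangent_le_1:
  assumes "0 \<le> t" "v \<le> 1"
  shows "tangent t v \<le> 1"
proof -
  have "tangent t v \<le> tangent t 1" using assms by (rule tangent_mono)
  also have "\<dots> = 1 - (1 - t)^2" by (simp add: tangent_eq)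
  also have "\<dots> \<le> 1" by (simp add: zero_le_power2)
  finally show ?thesis .
qed

definition tangent_point :: "nat \<Rightarrow> nat \<Rightarrow> real" where
  "tangent_point N k = real k / real (N+1)"

definition tangent_max :: "nat \<Rightarrow> nat set \<Rightarrow> real \<Rightarrow> real" where
  "tangent_max N S v = Max (insert 0 ((\<lambda>k. tangent (tangent_point N k) v) ` S))"

definition tangent_cdf :: "nat \<Rightarrow> nat set \<Rightarrow> real \<Rightarrow> real" where
  "tangent_cdf N S v = 1 - 1 / (1 + tangent_max N S v)"

definition hard_cdf :: "nat \<Rightarrow> nat set \<Rightarrow> real \<Rightarrow> real" where
  "hard_cdf N S v = (if v < 0 then 0 else if v < 1 then tangent_cdf N S v else 1)"

context
  fixes N :: nat and S :: "nat set"
  assumes S: "S \<subseteq> {1..N}"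
begin

lemma finite_S: "finite S" using S finite_subset by blast

lemma tangent_point_bounds: "k \<in> S \<Longrightarrow> 0 < tangent_point N k \<and> tangent_point N k < 1"
  using S unfolding tangent_point_def by auto

lemma tangent_le_tangent_max: "k \<in> S \<Longrightarrow> tangent (tangent_point N k) v \<le> tangent_max N S v"
  unfolding tangent_max_def using finite_S by (intro Max_ge) auto

lemma tangent_max_nonneg: "0 \<le> tangent_max N S v"
  unfolding tangent_max_def using finite_S by (intro Max_ge) auto

lemma tangent_max_le:
  "(\<And>k. k \<in> S \<Longrightarrow> tangent (tangent_point N k) v \<le> c) \<Longrightarrow> 0 \<le> c \<Longrightarrow> tangent_max N S v \<le> c"
  unfolding tangent_max_def using finite_S by (subst Max_le_iff) auto

lemma tangent_max_lipschitz: "tangent_max N S u \<le> tangent_max N S v + 2 * \<bar>u - v\<bar>"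
proof (rule tangent_max_le)
  fix k assume k: "k \<in> S"
  have "tangent (tangent_point N k) u \<le> tangent (tangent_point N k) v + 2 * \<bar>u - v\<bar>"
    using tangent_point_bounds[OF k] by (intro tangent_lipschitz) auto
  then show "tangent (tangent_point N k) u \<le> tangent_max N S v + 2 * \<bar>u - v\<bar>"
    using tangent_le_tangent_max[OF k, of v] by linarith
qed (use tangent_max_nonneg[of v] in simp)

lemma tangent_max_mono: "u \<le> v \<Longrightarrow> tangent_max N S u \<le> tangent_max N S v"
proof (rule tangent_max_le)
  fix k assume k: "k \<in> S" and "u \<le> v"
  then have "tangent (tangent_point N k) u \<le> tangent (tangent_point N k) v"
    using tangent_point_bounds[OF k] by (intro tangent_mono) auto
  then show "tangent (tangent_point N k) u \<le> tangent_max N S v"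
    using tangent_le_tangent_max[OF k, of v] by linarith
qed (rule tangent_max_nonneg)

lemma tangent_max_convex:
  assumes m: "0 \<le> m" "m \<le> 1"
  shows "tangent_max N S (m * a + (1 - m) * b)
    \<le> m * tangent_max N S a + (1 - m) * tangent_max N S b"
proof (rule tangent_max_le)
  fix k assume "k \<in> S"
  then show "tangent (tangent_point N k) (m * a + (1 - m) * b)
      \<le> m * tangent_max N S a + (1 - m) * tangent_max N S b"
    unfolding tangent_affine using tangent_le_tangent_max m by (intro add_mono mult_left_mono) auto
qed (use tangent_max_nonneg m in simp)

lemma tangent_max_le_1: "v \<le> 1 \<Longrightarrow> tangent_max N S v \<le> 1"
  using tangent_point_bounds by (intro tangent_max_le tangent_le_1) (auto simp: less_imp_le)

lemma tangent_cdf_lipschitz: "\<bar>tangent_cdf N S u - tangent_cdf N S v\<bar> \<le> 2 * \<bar>u - v\<bar>"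
proof -
  define hu hv where "hu = tangent_max N S u" and "hv = tangent_max N S v"
  have h: "0 \<le> hu" "0 \<le> hv" unfolding hu_def hv_def by (rule tangent_max_nonneg)+
  then have D: "1 \<le> (1 + hu) * (1 + hv)" by (simp add: algebra_simps add_increasing)
  have "\<bar>tangent_cdf N S u - tangent_cdf N S v\<bar> = \<bar>hu - hv\<bar> / ((1 + hu) * (1 + hv))"
    unfolding tangent_cdf_def hu_def[symmetric] hv_def[symmetric] using h
    by (simp add: field_simps abs_divide)
  also have "\<dots> \<le> \<bar>hu - hv\<bar>" using D by (simp add: divide_le_eq mult_le_cancel_left1)
  also have "\<dots> \<le> 2 * \<bar>u - v\<bar>"
    using tangent_max_lipschitz[of u v] tangent_max_lipschitz[of v u]
    unfolding hu_def hv_def by (simp add: abs_le_iff abs_minus_commute)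
  finally show ?thesis .
qed

lemma tangent_cdf_mono: "u \<le> v \<Longrightarrow> tangent_cdf N S u \<le> tangent_cdf N S v"
  unfolding tangent_cdf_def using tangent_max_mono[of u v] tangent_max_nonneg[of u]
  by (simp add: frac_le)

lemma tangent_cdf_bounds: "0 \<le> tangent_cdf N S v" "tangent_cdf N S v \<le> 1"
  unfolding tangent_cdf_def using tangent_max_nonneg[of v] by auto

lemma tangent_cdf_0: "tangent_cdf N S 0 = 0"
proof -
  have "tangent_max N S 0 \<le> 0"
    using tangent_point_bounds by (intro tangent_max_le) (auto simp: tangent_def)
  then show ?thesis using tangent_max_nonneg[of 0] unfolding tangent_cdf_def by simp
qed

lemma hard_cdf_mono: "u \<le> v \<Longrightarrow> hard_cdf N S u \<le> hard_cdf N S v"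
  unfolding hard_cdf_def using tangent_cdf_bounds tangent_cdf_mono by auto

lemma tangent_cdf_tendsto_right: "(tangent_cdf N S \<longlongrightarrow> tangent_cdf N S x) (at_right x)"
proof (rule tendstoI)
  fix d :: real assume d: "d > 0"
  show "eventually (\<lambda>y. dist (tangent_cdf N S y) (tangent_cdf N S x) < d) (at_right x)"
    unfolding eventually_at_right_field
  proof (intro exI[of _ "x + d/4"] conjI allI impI)
    show "x < x + d/4" using d by simp
    fix y assume y: "x < y" "y < x + d/4"
    have "dist (tangent_cdf N S y) (tangent_cdf N S x) \<le> 2 * \<bar>y - x\<bar>"
      using tangent_cdf_lipschitz[of y x] by (simp add: dist_real_def)
    also have "\<dots> < d" using y d by simp
    finally show "dist (tangent_cdf N S y) (tangent_cdf N S x) < d" .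
  qed
qed

lemma is_cdf_hard_cdf: "is_cdf (hard_cdf N S)"
  unfolding is_cdf_def
proof (intro conjI allI)
  show "mono (hard_cdf N S)" unfolding mono_def using hard_cdf_mono by blast
next
  fix x :: real
  consider "x < 0" | "0 \<le> x" "x < 1" | "1 \<le> x" by linarith
  then have "(hard_cdf N S \<longlongrightarrow> hard_cdf N S x) (at_right x)"
  proof cases
    case 1
    have "eventually (\<lambda>y. hard_cdf N S y = hard_cdf N S x) (at_right x)"
      unfolding eventually_at_right_field using 1 by (intro exI[of _ 0]) (auto simp: hard_cdf_def)
    then show ?thesis by (rule tendsto_eventually)
  next
    case 2
    have "eventually (\<lambda>y. tangent_cdf N S y = hard_cdf N S y) (at_right x)"
      unfolding eventually_at_right_field using 2 by (intro exI[of _ 1]) (auto simp: hard_cdf_def)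
    moreover have "hard_cdf N S x = tangent_cdf N S x" using 2 by (simp add: hard_cdf_def)
    ultimately show ?thesis using tangent_cdf_tendsto_right[of x] by (simp add: tendsto_cong)
  next
    case 3
    have "eventually (\<lambda>y. hard_cdf N S y = hard_cdf N S x) (at_right x)"
      using eventually_at_right_less[of x] by eventually_elim (use 3 in \<open>auto simp: hard_cdf_def\<close>)
    then show ?thesis by (rule tendsto_eventually)
  qed
  then show "continuous (at_right x) (hard_cdf N S)" by (simp add: continuous_within)
next
  have "eventually (\<lambda>y. hard_cdf N S y = 0) at_bot"
    using eventually_gt_at_bot[of 0] by eventually_elim (auto simp: hard_cdf_def)
  then show "(hard_cdf N S \<longlongrightarrow> 0) at_bot" by (rule tendsto_eventually)
next
  have "eventually (\<lambda>y. hard_cdf N S y = 1) at_top"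
    using eventually_ge_at_top[of 1] by eventually_elim (auto simp: hard_cdf_def)
  then show "(hard_cdf N S \<longlongrightarrow> 1) at_top" by (rule tendsto_eventually)
qed

lemma unit_cdf_hard_cdf: "unit_cdf (hard_cdf N S)"
  by unfold_locales (auto simp: is_cdf_hard_cdf supported_01_def hard_cdf_def)

lemma cdf_left_hard_cdf:
  assumes v: "0 \<le> v" "v \<le> 1"
  shows "cdf_left (hard_cdf N S) v = tangent_cdf N S v"
proof -
  interpret unit_cdf "hard_cdf N S" by (rule unit_cdf_hard_cdf)
  have "hard_cdf N S u \<le> tangent_cdf N S v" if "u < v" for u
  proof (cases "u < 0")
    case True
    then show ?thesis using tangent_cdf_bounds(1)[of v] by (simp add: hard_cdf_def)
  next
    case False
    then show ?thesis using that v tangent_cdf_mono[of u v] by (simp add: hard_cdf_def)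
  qed
  then have le: "cdf_left (hard_cdf N S) v \<le> tangent_cdf N S v" by (rule cdf_left_least)
  have close: "tangent_cdf N S v \<le> cdf_left (hard_cdf N S) v + 2 * d" if d: "0 < d" "d \<le> v" for d
  proof -
    have "hard_cdf N S (v - d) \<le> cdf_left (hard_cdf N S) v" using d F_le_cdf_left[of "v - d" v]
      by simp
    moreover have "hard_cdf N S (v - d) = tangent_cdf N S (v - d)"
      using d v by (simp add: hard_cdf_def)
    moreover have "tangent_cdf N S v \<le> tangent_cdf N S (v - d) + 2 * d"
      using tangent_cdf_lipschitz[of v "v - d"] d by simp
    ultimately show ?thesis by linarith
  qed
  show ?thesis
  proof (cases "v = 0")
    case True
    then show ?thesis using cdf_left_eq_0[of 0] tangent_cdf_0 by simp
  next
    case False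
    have "tangent_cdf N S v \<le> cdf_left (hard_cdf N S) v + e" if "0 < e" for e
    proof -
      have "tangent_cdf N S v \<le> cdf_left (hard_cdf N S) v + 2 * min (e/2) v"
        using that False v by (intro close) auto
      then show ?thesis by linarith
    qed
    then have "tangent_cdf N S v \<le> cdf_left (hard_cdf N S) v" by (rule field_le_epsilon)
    with le show ?thesis by (rule antisym)
  qed
qed

lemma sale_prob_hard_cdf:
  "0 \<le> v \<Longrightarrow> v \<le> 1 \<Longrightarrow> sale_prob (hard_cdf N S) v = 1 / (1 + tangent_max N S v)"
  unfolding sale_prob_def using cdf_left_hard_cdf unfolding tangent_cdf_def by simp

lemma hard_cdf_in_regular_01: "hard_cdf N S \<in> regular_01"
proof -
  interpret unit_cdf "hard_cdf N S" by (rule unit_cdf_hard_cdf)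
  have "myerson_regular (hard_cdf N S)"
    by (rule myerson_regular_if_odds_convex[of "tangent_max N S"])
      (auto simp: sale_prob_hard_cdf tangent_max_nonneg tangent_max_convex)
  then show ?thesis unfolding regular_01_def using is_cdf_hard_cdf unit_cdf_axioms
    by (simp add: unit_cdf_def)
qed

text \<open>Dropping the point \<open>j\<close> lowers the envelope at \<open>tangent_point N j\<close> by at least
  \<open>(1/(N+1))\<^sup>2\<close>, the squared distance to the nearest remaining tangent point.\<close>

lemma tangent_max_at_missing_point:
  assumes j: "j \<notin> S" "1 \<le> j" "j \<le> N"
  shows "tangent_max N S (tangent_point N j) \<le> (tangent_point N j)^2 - (1 / real (N+1))^2"
proof (rule tangent_max_le)
  fix k assume k: "k \<in> S"
  have "k \<noteq> j" using k j by auto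
  then have "1 \<le> \<bar>real j - real k\<bar>" by (cases "j < k") auto
  then have "1 / real (N+1) \<le> \<bar>real j - real k\<bar> / real (N+1)" by (intro divide_right_mono) auto
  also have "\<dots> = \<bar>tangent_point N j - tangent_point N k\<bar>"
    unfolding tangent_point_def diff_divide_distrib[symmetric] by (simp add: abs_divide)
  finally have "(1 / real (N+1))^2 \<le> (tangent_point N j - tangent_point N k)^2"
    by (metis abs_ge_zero power2_abs power_mono zero_le_divide_1_iff of_nat_0_le_iff)
  then show "tangent (tangent_point N k) (tangent_point N j)
      \<le> (tangent_point N j)^2 - (1 / real (N+1))^2"
    unfolding tangent_eq by linarith
next
  have "1 / real (N+1) \<le> tangent_point N j"
    unfolding tangent_point_def using j by (intro divide_right_mono) auto
  then show "0 \<le> (tangent_point N j)^2 - (1 / real (N+1))^2" by (simp add: power_mono)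
qed

end

lemma hard_cdf_separated:
  fixes e :: real
  assumes S: "S \<subseteq> {1..N}" and S': "S' \<subseteq> {1..N}" and j: "j \<in> S" "j \<notin> S'"
    and e: "e > 0" and gap: "20 * e \<le> (1 / real (N+1))^2"
  shows "\<exists>u. hard_cdf N S' (u + 3*e) + 3*e < hard_cdf N S u"
proof -
  define t where "t = tangent_point N j"
  define u where "u = t - 3 * e"
  have jN: "1 \<le> j" "j \<le> N" using j S by auto
  have t: "1 / real (N+1) \<le> t" "t < 1"
    unfolding t_def tangent_point_def using jN
    by (auto intro: divide_right_mono simp: divide_less_eq)
  have "(1 / real (N+1))^2 \<le> (1 / real (N+1))^1" by (rule power_decreasing) auto
  then have u: "0 \<le> u" "u < 1" unfolding u_def using t gap e by auto
  have "tangent t u \<le> tangent_max N S u" unfolding t_def by (rule tangent_le_tangent_max[OF S j(1)])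
  moreover have "tangent t u = t^2 - 6 * e * t"
    unfolding u_def tangent_def by (simp add: algebra_simps power2_eq_square)
  moreover have "6 * e * t \<le> 6 * e" using t e by (simp add: mult_left_le)
  ultimately have low: "t^2 - 6 * e \<le> tangent_max N S u" by linarith
  have high: "tangent_max N S' t \<le> t^2 - 20 * e"
    using tangent_max_at_missing_point[OF S' j(2) jN] gap unfolding t_def by linarith
  define H where "H = 1 + tangent_max N S u"
  define H' where "H' = 1 + tangent_max N S' t"
  have H: "1 \<le> H" "H \<le> 2" "1 \<le> H'" "H' \<le> 2" unfolding H_def H'_def
    using tangent_max_nonneg[OF S] tangent_max_le_1[OF S] tangent_max_nonneg[OF S']
      tangent_max_le_1[OF S'] u t by auto
  have diff: "14 * e \<le> H - H'" unfolding H_def H'_def using low high by linarith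
  have "1 / H' - 1 / H = (H - H') / (H * H')" using H by (simp add: field_simps)
  also have "\<dots> \<ge> (H - H') / 4"
  proof -
    have "H * H' \<le> 2 * 2" using H by (intro mult_mono) auto
    then show ?thesis using H diff e by (intro divide_left_mono) auto
  qed
  finally have "(H - H') / 4 \<le> 1 / H' - 1 / H" .
  moreover have "(14 * e) / 4 \<le> (H - H') / 4" using diff by (intro divide_right_mono) auto
  ultimately have "3 * e < 1 / H' - 1 / H" using e by linarith
  moreover have "hard_cdf N S u = 1 - 1 / H"
    using u unfolding hard_cdf_def tangent_cdf_def H_def by simp
  moreover have "hard_cdf N S' (u + 3*e) = 1 - 1 / H'"
  proof -
    have "0 \<le> t" using t(1) by (smt (verit) divide_nonneg_nonneg of_nat_0_le_iff)
    then show ?thesis using t(2) unfolding hard_cdf_def tangent_cdf_def H'_def u_def by simp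
  qed
  ultimately show ?thesis by (intro exI[of _ u]) simp
qed

lemma describable_regular_01_bits_ge:
  fixes e :: real
  assumes e: "e > 0" and gap: "20 * e \<le> (1 / real (N+1))^2" and desc: "describable regular_01 b e"
  shows "N \<le> b"
proof -
  obtain C where C: "finite C" "card C \<le> 2^b" "\<forall>G\<in>C. is_cdf G"
      "\<forall>F\<in>regular_01. \<exists>G\<in>C. levy_dist F G \<le> e"
    using desc unfolding describable_def by blast
  define approx where "approx S = (SOME G. G \<in> C \<and> levy_dist (hard_cdf N S) G \<le> e)" for S
  have approx: "approx S \<in> C \<and> levy_dist (hard_cdf N S) (approx S) \<le> e" if "S \<in> Pow {1..N}" for S
  proof -
    have "hard_cdf N S \<in> regular_01" using that by (intro hard_cdf_in_regular_01) auto
    then have "\<exists>G. G \<in> C \<and> levy_dist (hard_cdf N S) G \<le> e" using C(4) by blast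
    then show ?thesis unfolding approx_def by (rule someI_ex)
  qed
  have distinct: False if S: "S \<in> Pow {1..N}" and S': "S' \<in> Pow {1..N}"
      and eq: "approx S = approx S'" and j: "j \<in> S" "j \<notin> S'" for S S' j
  proof -
    obtain u where u: "hard_cdf N S' (u + 3*e) + 3*e < hard_cdf N S u"
      using hard_cdf_separated[of S N S' j e] S S' j e gap by auto
    have G: "is_cdf (approx S)" using approx[OF S] C(3) by blast
    have "hard_cdf N S u - 3*e/2 \<le> approx S (u + 3*e/2)"
      using levy_dist_le_imp_close[OF is_cdf_hard_cdf G _ e, of S N "u + 3*e/2"] approx[OF S] S
      by auto
    moreover have "approx S (u + 3*e/2) \<le> hard_cdf N S' (u + 3*e) + 3*e/2"
      using levy_dist_le_imp_close[OF is_cdf_hard_cdf G _ e, of S' N "u + 3*e/2"]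
        approx[OF S'] eq S'
      by (auto simp: add.assoc)
    ultimately show False using u by linarith
  qed
  have "inj_on approx (Pow {1..N})"
  proof (rule inj_onI)
    fix S S' assume S: "S \<in> Pow {1..N}" and S': "S' \<in> Pow {1..N}" and eq: "approx S = approx S'"
    show "S = S'"
    proof (rule ccontr)
      assume "S \<noteq> S'"
      then obtain j where "(j \<in> S \<and> j \<notin> S') \<or> (j \<in> S' \<and> j \<notin> S)" by blast
      then show False using distinct[OF S S' eq] distinct[OF S' S eq[symmetric]] by blast
    qed
  qed
  then have "card (approx ` Pow {1..N}) = 2^N" by (simp add: card_image card_Pow)
  moreover have "approx ` Pow {1..N} \<subseteq> C" using approx by blast
  then have "card (approx ` Pow {1..N}) \<le> card C" by (rule card_mono[OF C(1)])
  ultimately have "(2::nat)^N \<le> 2^b" using C(2) by linarith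
  then show ?thesis by simp
qed

lemma describable_regular_01_lower:
  fixes e :: real
  assumes e: "0 < e" "e < 1/400" and desc: "describable regular_01 b e"
  shows "1/10 * e powr (-1/2) \<le> real b"
proof -
  define z where "z = 1 / sqrt e"
  define y where "y = 1 / sqrt (20 * e)"
  have "sqrt e \<le> 1/20" using e real_sqrt_le_mono[of e "1/400"] by (simp add: real_sqrt_divide)
  then have z20: "20 \<le> z" unfolding z_def using e by (simp add: field_simps)
  have "sqrt 20 \<le> (5::real)" by (rule real_le_lsqrt) auto
  then have "z / 5 \<le> z / sqrt 20" using z20 by (intro divide_left_mono) auto
  moreover have "y = z / sqrt 20" unfolding y_def z_def using e by (simp add: real_sqrt_mult)
  ultimately have yz: "z / 5 \<le> y" by simp
  define N where "N = nat \<lfloor>y\<rfloor> - 1"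
  have fl: "4 \<le> \<lfloor>y\<rfloor>" using yz z20 by linarith
  then have N1: "real (N + 1) = of_int \<lfloor>y\<rfloor>" unfolding N_def by (simp add: of_nat_diff)
  then have "1 / y \<le> 1 / real (N + 1)" using fl by (intro divide_left_mono) auto
  then have "(1/y)^2 \<le> (1 / real (N+1))^2" using e unfolding y_def by (intro power_mono) auto
  moreover have "(1/y)^2 = 20 * e" unfolding y_def using e by (simp add: power_divide)
  ultimately have "N \<le> b" using describable_regular_01_bits_ge[OF e(1) _ desc] by simp
  moreover have "z / 10 \<le> real N" using N1 yz z20 by linarith
  moreover have "e powr (-1/2) = z"
    unfolding z_def using e by (simp add: powr_minus_divide powr_half_sqrt)
  ultimately show ?thesis by simp
qed

theorem theorem1:
  shows "(\<exists>c k \<epsilon>0. c > 0 \<and> \<epsilon>0 > 0 \<and> (\<forall>\<epsilon>. 0 < \<epsilon> \<and> \<epsilon> < \<epsilon>0 \<longrightarrow>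
            describable regular_01 (nat \<lceil>c * \<epsilon> powr (-1/2) * (ln (1/\<epsilon>)) ^ k\<rceil>) \<epsilon>))
       \<and> (\<exists>c \<epsilon>0. c > 0 \<and> \<epsilon>0 > 0 \<and> (\<forall>\<epsilon> b. 0 < \<epsilon> \<and> \<epsilon> < \<epsilon>0 \<and> describable regular_01 b \<epsilon>
            \<longrightarrow> real b \<ge> c * \<epsilon> powr (-1/2)))"
proof
  show "\<exists>c k \<epsilon>0. c > 0 \<and> \<epsilon>0 > 0 \<and> (\<forall>\<epsilon>. 0 < \<epsilon> \<and> \<epsilon> < \<epsilon>0 \<longrightarrow>
            describable regular_01 (nat \<lceil>c * \<epsilon> powr (-1/2) * (ln (1/\<epsilon>)) ^ k\<rceil>) \<epsilon>)"
    using describable_regular_01_upper by (intro exI[of _ 1300] exI[of _ 2] exI[of _ "1/100"]) auto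
  show "\<exists>c \<epsilon>0. c > 0 \<and> \<epsilon>0 > 0 \<and> (\<forall>\<epsilon> b. 0 < \<epsilon> \<and> \<epsilon> < \<epsilon>0 \<and> describable regular_01 b \<epsilon>
            \<longrightarrow> real b \<ge> c * \<epsilon> powr (-1/2))"
    using describable_regular_01_lower by (intro exI[of _ "1/10"] exI[of _ "1/400"]) auto
qed

end
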